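(* Let $\psi_{AB}$ be an $m$-dimensional noisy maximally entangled state with maximal correlation $\rho=\rho(\psi_{AB})$. For any standard orthonormal bases $\mathcal{A}=\{\mathcal{A}_i\}_{i=0}^{m^2-1}$ and $\mathcal{B}=\{\mathcal{B}_i\}_{i=0}^{m^2-1}$ of $\mathcal{M}_m$, the correlation matrix $\mathsf{Corr}(\psi_{AB},\mathcal{A},\mathcal{B})$ has largest singular value $1$ and second largest singular value $\rho$. Moreover, there exist standard orthonormal bases $\mathcal{A},\mathcal{B}$ of $\mathcal{M}_m$ such that $\mathsf{Corr}(\psi_{AB},\mathcal{A},\mathcal{B})_{i,j}=c_i$ if $i=j$ and $0$ otherwise, where $c_0=1$, $c_1=\rho$ and $c_0\ge c_1\ge c_2\ge\cdots\ge c_{m^2-1}$.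
   Context: A standard orthonormal basis of $\mathcal{M}_m$ (complex $m\times m$ matrices with inner product $\frac1m\mathrm{Tr}X^\dagger Y$) is an orthonormal basis of Hermitian matrices $\{\mathcal{B}_0,\ldots,\mathcal{B}_{m^2-1}\}$ with $\mathcal{B}_0=\mathrm{id}_m$. The correlation matrix $\mathsf{Corr}(\psi_{AB},\mathcal{A},\mathcal{B})$ is the $m^2\times m^2$ matrix indexed by $i,j\in\{0,\ldots,m^2-1\}$ with entries $\mathrm{Tr}((\mathcal{A}_i\otimes\mathcal{B}_j)\psi_{AB})$. A noisy maximally entangled state is a state $\psi_{AB}$ on $\mathbb{C}^m\otimes\mathbb{C}^m$ with $\psi_A=\psi_B=\mathrm{id}_m/m$ and maximal correlation $\rho(\psi_{AB})=\sup\{|\mathrm{Tr}((P^\dagger\otimes Q)\psi_{AB})|:\mathrm{Tr}P=\mathrm{Tr}Q=0,\ \tfrac1m\mathrm{Tr}P^\dagger P=\tfrac1m\mathrm{Tr}Q^\dagger Q=1\}<1$. *)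

theory Defs
  imports "Jordan_Normal_Form.Schur_Decomposition" "Jordan_Normal_Form.Char_Poly"
begin

text \<open>Complex matrices are Jordan_Normal_Form matrices of type complex mat.
  Tensor products of C^m with C^m use the index convention (a,b) to a*m+b.\<close>

definition mtrace :: "complex mat \<Rightarrow> complex" where
  "mtrace A = (\<Sum>i<dim_row A. A $$ (i,i))"

definition kron :: "complex mat \<Rightarrow> complex mat \<Rightarrow> complex mat" where
  "kron A B = mat (dim_row A * dim_row B) (dim_col A * dim_col B)
     (\<lambda>(i,j). A $$ (i div dim_row B, j div dim_col B) * B $$ (i mod dim_row B, j mod dim_col B))"

definition hermitian :: "complex mat \<Rightarrow> bool" where
  "hermitian A \<longleftrightarrow> A \<in> carrier_mat (dim_row A) (dim_row A) \<and> mat_adjoint A = A"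

definition psd :: "complex mat \<Rightarrow> bool" where
  "psd A \<longleftrightarrow> hermitian A \<and>
     (\<forall>v \<in> carrier_vec (dim_row A). 0 \<le> Re (conjugate v \<bullet> (A *\<^sub>v v)))"

definition bipartite_state :: "nat \<Rightarrow> complex mat \<Rightarrow> bool" where
  "bipartite_state m \<psi> \<longleftrightarrow> \<psi> \<in> carrier_mat (m*m) (m*m) \<and> psd \<psi> \<and> mtrace \<psi> = 1"

definition ptrace_B :: "nat \<Rightarrow> complex mat \<Rightarrow> complex mat" where
  "ptrace_B m \<psi> = mat m m (\<lambda>(i,j). \<Sum>b<m. \<psi> $$ (i*m+b, j*m+b))"

definition ptrace_A :: "nat \<Rightarrow> complex mat \<Rightarrow> complex mat" where
  "ptrace_A m \<psi> = mat m m (\<lambda>(i,j). \<Sum>a<m. \<psi> $$ (a*m+i, a*m+j))"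

definition max_corr :: "nat \<Rightarrow> complex mat \<Rightarrow> real" where
  "max_corr m \<psi> = Sup {cmod (mtrace (kron (mat_adjoint P) Q * \<psi>)) | P Q.
      P \<in> carrier_mat m m \<and> Q \<in> carrier_mat m m \<and> mtrace P = 0 \<and> mtrace Q = 0 \<and>
      mtrace (mat_adjoint P * P) / of_nat m = 1 \<and> mtrace (mat_adjoint Q * Q) / of_nat m = 1}"

definition noisy_max_ent :: "nat \<Rightarrow> complex mat \<Rightarrow> bool" where
  "noisy_max_ent m \<psi> \<longleftrightarrow> bipartite_state m \<psi> \<and>
     ptrace_B m \<psi> = (1 / of_nat m) \<cdot>\<^sub>m 1\<^sub>m m \<and>
     ptrace_A m \<psi> = (1 / of_nat m) \<cdot>\<^sub>m 1\<^sub>m m \<and>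
     max_corr m \<psi> < 1"

definition std_onb :: "nat \<Rightarrow> (nat \<Rightarrow> complex mat) \<Rightarrow> bool" where
  "std_onb m \<B> \<longleftrightarrow>
     (\<forall>i<m^2. \<B> i \<in> carrier_mat m m \<and> hermitian (\<B> i)) \<and>
     \<B> 0 = 1\<^sub>m m \<and>
     (\<forall>i<m^2. \<forall>j<m^2. mtrace (mat_adjoint (\<B> i) * \<B> j) / of_nat m = (if i = j then 1 else 0)) \<and>
     (\<forall>X \<in> carrier_mat m m. \<exists>c :: nat \<Rightarrow> complex.
        (\<forall>a<m. \<forall>b<m. X $$ (a,b) = (\<Sum>i<m^2. c i * \<B> i $$ (a,b))))"

definition corr_mat :: "nat \<Rightarrow> complex mat \<Rightarrow> (nat \<Rightarrow> complex mat) \<Rightarrow> (nat \<Rightarrow> complex mat) \<Rightarrow> complex mat" where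
  "corr_mat m \<psi> \<A> \<B> = mat (m^2) (m^2) (\<lambda>(i,j). mtrace (kron (\<A> i) (\<B> j) * \<psi>))"

text \<open>s is the list of singular values of the square matrix C, in non-increasing order
  (with multiplicity): the squares of its entries are the eigenvalues of C^dagger C,
  counted with algebraic multiplicity.\<close>
definition singular_values :: "complex mat \<Rightarrow> real list \<Rightarrow> bool" where
  "singular_values C s \<longleftrightarrow> length s = dim_col C \<and> sorted_wrt (\<ge>) s \<and> (\<forall>x\<in>set s. 0 \<le> x) \<and>
     char_poly (mat_adjoint C * C) = (\<Prod>x\<leftarrow>s. [: - complex_of_real (x^2), 1 :])"

end

(* The correlation matrix is real, since psi and the basis elements are Hermitian, and the
   partial-trace conditions make its first row and column those of the identity.  A singular value
   decomposition of the remaining block by real orthogonal matrices fixing the first coordinate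
   rotates A and B into standard bases in which the correlation matrix is diagonal with entries
   c_0 = 1 and c_1 >= c_2 >= ... >= 0, which are therefore its singular values.  Expanding
   traceless P and Q in these bases bounds |tr((P^dagger (x) Q) psi)| by c_1 via AM-GM, with
   equality at the second basis elements; hence c_1 = rho < 1 = c_0.  Standard bases exist: a
   Householder reflection turns the basis of scaled matrix units E_aa, E_ab + E_ba, i (E_ab - E_ba)
   into one whose first element is the identity. *)

theory Submission
  imports Defs "Jordan_Normal_Form.Spectral_Radius"
begin

section \<open>Real square matrices\<close>

text \<open>Real n \<times> n matrices are represented as functions of type rmat whose entries outside the
  range below n are irrelevant; they are compared with rmat_eq n.\<close>

type_synonym rmat = "nat \<Rightarrow> nat \<Rightarrow> real"

definition rmat_mult :: "nat \<Rightarrow> rmat \<Rightarrow> rmat \<Rightarrow> rmat" where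
  "rmat_mult n A B = (\<lambda>i j. \<Sum>k<n. A i k * B k j)"

definition rmat_transpose :: "rmat \<Rightarrow> rmat" where
  "rmat_transpose A = (\<lambda>i j. A j i)"

definition rmat_diag :: "(nat \<Rightarrow> real) \<Rightarrow> rmat" where
  "rmat_diag c = (\<lambda>i j. if i = j then c i else 0)"

abbreviation rmat_one :: rmat where
  "rmat_one \<equiv> rmat_diag (\<lambda>_. 1)"

definition rmat_eq :: "nat \<Rightarrow> rmat \<Rightarrow> rmat \<Rightarrow> bool" where
  "rmat_eq n A B \<longleftrightarrow> (\<forall>i<n. \<forall>j<n. A i j = B i j)"

definition rmat_orthogonal :: "nat \<Rightarrow> rmat \<Rightarrow> bool" where
  "rmat_orthogonal n U \<longleftrightarrow>
     rmat_eq n (rmat_mult n (rmat_transpose U) U) rmat_one \<and> rmat_eq n (rmat_mult n U (rmat_transpose U)) rmat_one"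

definition rmat_block :: "real \<Rightarrow> rmat \<Rightarrow> rmat" where
  "rmat_block a X = (\<lambda>i j. if i = 0 \<and> j = 0 then a else if i = 0 \<or> j = 0 then 0 else X (i - 1) (j - 1))"

lemma rmat_eq_refl [simp]: "rmat_eq n A A"
  unfolding rmat_eq_def by simp

lemma rmat_eq_sym: "rmat_eq n A B \<Longrightarrow> rmat_eq n B A"
  unfolding rmat_eq_def by simp

lemma rmat_eq_trans [trans]: "rmat_eq n A B \<Longrightarrow> rmat_eq n B C \<Longrightarrow> rmat_eq n A C"
  unfolding rmat_eq_def by simp

lemma rmat_eqD: "rmat_eq n A B \<Longrightarrow> i < n \<Longrightarrow> j < n \<Longrightarrow> A i j = B i j"
  unfolding rmat_eq_def by simp

lemma rmat_mult_cong:
  "rmat_eq n A A' \<Longrightarrow> rmat_eq n B B' \<Longrightarrow> rmat_eq n (rmat_mult n A B) (rmat_mult n A' B')"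
  unfolding rmat_eq_def rmat_mult_def by simp

lemma rmat_transpose_cong: "rmat_eq n A B \<Longrightarrow> rmat_eq n (rmat_transpose A) (rmat_transpose B)"
  unfolding rmat_eq_def rmat_transpose_def by simp

lemma rmat_mult_assoc: "rmat_mult n (rmat_mult n A B) C = rmat_mult n A (rmat_mult n B C)"
proof (intro ext)
  fix i j
  have "rmat_mult n (rmat_mult n A B) C i j = (\<Sum>l<n. \<Sum>k<n. A i k * B k l * C l j)"
    unfolding rmat_mult_def by (simp add: sum_distrib_right)
  also have "\<dots> = (\<Sum>k<n. \<Sum>l<n. A i k * B k l * C l j)"
    by (rule sum.swap)
  also have "\<dots> = rmat_mult n A (rmat_mult n B C) i j"
    unfolding rmat_mult_def by (simp add: sum_distrib_left mult.assoc)
  finally show "rmat_mult n (rmat_mult n A B) C i j = rmat_mult n A (rmat_mult n B C) i j" .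
qed

lemma rmat_transpose_mult:
  "rmat_transpose (rmat_mult n A B) = rmat_mult n (rmat_transpose B) (rmat_transpose A)"
  unfolding rmat_mult_def rmat_transpose_def by (intro ext) (simp add: mult.commute)

lemma rmat_transpose_transpose [simp]: "rmat_transpose (rmat_transpose A) = A"
  unfolding rmat_transpose_def by simp

lemma rmat_transpose_diag [simp]: "rmat_transpose (rmat_diag c) = rmat_diag c"
  unfolding rmat_transpose_def rmat_diag_def by (intro ext) auto

lemma sum_rmat_diag_left: "i < n \<Longrightarrow> (\<Sum>k<n. rmat_diag c i k * f k) = c i * f i"
proof -
  assume "i < n"
  have "(\<Sum>k<n. rmat_diag c i k * f k) = (\<Sum>k<n. if k = i then c i * f i else 0)"
    unfolding rmat_diag_def by (rule sum.cong) auto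
  with \<open>i < n\<close> show ?thesis
    by simp
qed

lemma sum_rmat_diag_right: "j < n \<Longrightarrow> (\<Sum>k<n. f k * rmat_diag c k j) = f j * c j"
proof -
  assume "j < n"
  have "(\<Sum>k<n. f k * rmat_diag c k j) = (\<Sum>k<n. if k = j then f j * c j else 0)"
    unfolding rmat_diag_def by (rule sum.cong) auto
  with \<open>j < n\<close> show ?thesis
    by simp
qed

lemma rmat_mult_diag_left: "i < n \<Longrightarrow> rmat_mult n (rmat_diag c) A i j = c i * A i j"
  unfolding rmat_mult_def by (rule sum_rmat_diag_left)

lemma rmat_mult_diag_right: "j < n \<Longrightarrow> rmat_mult n A (rmat_diag c) i j = A i j * c j"
  unfolding rmat_mult_def by (rule sum_rmat_diag_right)

lemma rmat_mult_one_left: "rmat_eq n (rmat_mult n rmat_one A) A"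
  unfolding rmat_eq_def by (simp add: rmat_mult_diag_left)

lemma rmat_mult_one_right: "rmat_eq n (rmat_mult n A rmat_one) A"
  unfolding rmat_eq_def by (simp add: rmat_mult_diag_right)

lemma rmat_mult_diag_diag: "rmat_eq n (rmat_mult n (rmat_diag c) (rmat_diag d)) (rmat_diag (\<lambda>i. c i * d i))"
  unfolding rmat_eq_def by (simp add: rmat_mult_diag_left) (simp add: rmat_diag_def)

lemma rmat_orthogonal_transpose: "rmat_orthogonal n U \<Longrightarrow> rmat_orthogonal n (rmat_transpose U)"
  unfolding rmat_orthogonal_def by simp

lemma rmat_orthogonal_cancel_left:
  assumes "rmat_orthogonal n U"
  shows "rmat_eq n (rmat_mult n (rmat_transpose U) (rmat_mult n U A)) A"
proof -
  have "rmat_eq n (rmat_mult n (rmat_transpose U) (rmat_mult n U A)) (rmat_mult n (rmat_mult n (rmat_transpose U) U) A)"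
    by (simp add: rmat_mult_assoc)
  also have "rmat_eq n \<dots> (rmat_mult n rmat_one A)"
    using assms unfolding rmat_orthogonal_def by (intro rmat_mult_cong) auto
  also have "rmat_eq n \<dots> A"
    by (rule rmat_mult_one_left)
  finally show ?thesis .
qed

lemma rmat_orthogonal_cancel_left':
  "rmat_orthogonal n U \<Longrightarrow> rmat_eq n (rmat_mult n U (rmat_mult n (rmat_transpose U) A)) A"
  using rmat_orthogonal_cancel_left[OF rmat_orthogonal_transpose] by simp

lemma rmat_orthogonal_cancel_right:
  assumes "rmat_orthogonal n V"
  shows "rmat_eq n (rmat_mult n (rmat_mult n A V) (rmat_transpose V)) A"
proof -
  have "rmat_eq n (rmat_mult n (rmat_mult n A V) (rmat_transpose V)) (rmat_mult n A (rmat_mult n V (rmat_transpose V)))"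
    by (simp add: rmat_mult_assoc)
  also have "rmat_eq n \<dots> (rmat_mult n A rmat_one)"
    using assms unfolding rmat_orthogonal_def by (intro rmat_mult_cong) auto
  also have "rmat_eq n \<dots> A"
    by (rule rmat_mult_one_right)
  finally show ?thesis .
qed

lemma rmat_orthogonal_mult:
  assumes U: "rmat_orthogonal n U" and V: "rmat_orthogonal n V"
  shows "rmat_orthogonal n (rmat_mult n U V)"
proof -
  have "rmat_eq n (rmat_mult n (rmat_transpose (rmat_mult n U V)) (rmat_mult n U V))
        (rmat_mult n (rmat_transpose V) (rmat_mult n (rmat_transpose U) (rmat_mult n U V)))"
    by (simp add: rmat_transpose_mult rmat_mult_assoc)
  also have "rmat_eq n \<dots> (rmat_mult n (rmat_transpose V) V)"
    by (intro rmat_mult_cong rmat_orthogonal_cancel_left[OF U] rmat_eq_refl)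
  also have "rmat_eq n \<dots> rmat_one"
    using V unfolding rmat_orthogonal_def by simp
  finally have 1: "rmat_eq n (rmat_mult n (rmat_transpose (rmat_mult n U V)) (rmat_mult n U V)) rmat_one" .
  have "rmat_eq n (rmat_mult n (rmat_mult n U V) (rmat_transpose (rmat_mult n U V)))
        (rmat_mult n U (rmat_mult n V (rmat_mult n (rmat_transpose V) (rmat_transpose U))))"
    by (simp add: rmat_transpose_mult rmat_mult_assoc)
  also have "rmat_eq n \<dots> (rmat_mult n U (rmat_transpose U))"
    by (intro rmat_mult_cong rmat_orthogonal_cancel_left'[OF V] rmat_eq_refl)
  also have "rmat_eq n \<dots> rmat_one"
    using U unfolding rmat_orthogonal_def by simp
  finally show ?thesis
    using 1 unfolding rmat_orthogonal_def by simp
qed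

lemma rmat_orthogonal_permute_cols:
  assumes W: "rmat_orthogonal n W" and p: "bij_betw p {..<n} {..<n}"
  shows "rmat_orthogonal n (\<lambda>k i. W k (p i))"
proof -
  have pn: "p i < n" if "i < n" for i
    using p that by (auto simp: bij_betw_def)
  have pinj: "p i = p j \<longleftrightarrow> i = j" if "i < n" "j < n" for i j
    using p that by (auto simp: bij_betw_def inj_on_def)
  have "rmat_mult n (rmat_transpose (\<lambda>k i. W k (p i))) (\<lambda>k i. W k (p i)) i j = rmat_one i j"
    if "i < n" "j < n" for i j
  proof -
    have "rmat_mult n (rmat_transpose (\<lambda>k i. W k (p i))) (\<lambda>k i. W k (p i)) i j =
          rmat_mult n (rmat_transpose W) W (p i) (p j)"
      unfolding rmat_mult_def rmat_transpose_def by simp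
    also have "\<dots> = rmat_one (p i) (p j)"
      using W pn that unfolding rmat_orthogonal_def rmat_eq_def by simp
    finally show ?thesis
      using pinj that unfolding rmat_diag_def by simp
  qed
  moreover have "rmat_mult n (\<lambda>k i. W k (p i)) (rmat_transpose (\<lambda>k i. W k (p i))) i j = rmat_one i j"
    if "i < n" "j < n" for i j
  proof -
    have "rmat_mult n (\<lambda>k i. W k (p i)) (rmat_transpose (\<lambda>k i. W k (p i))) i j = (\<Sum>k<n. W i (p k) * W j (p k))"
      unfolding rmat_mult_def rmat_transpose_def by simp
    also have "\<dots> = rmat_mult n W (rmat_transpose W) i j"
      using sum.reindex_bij_betw[OF p, of "\<lambda>k. W i k * W j k"]
      unfolding rmat_mult_def rmat_transpose_def by simp
    finally show ?thesis
      using W that unfolding rmat_orthogonal_def rmat_eq_def by simp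
  qed
  ultimately show ?thesis
    unfolding rmat_orthogonal_def rmat_eq_def by blast
qed

lemma rmat_block_mult: "rmat_mult (Suc n) (rmat_block a X) (rmat_block b Y) = rmat_block (a * b) (rmat_mult n X Y)"
  unfolding rmat_mult_def rmat_block_def
  by (intro ext, subst sum.lessThan_Suc_shift) simp

lemma rmat_transpose_block: "rmat_transpose (rmat_block a X) = rmat_block a (rmat_transpose X)"
  unfolding rmat_transpose_def rmat_block_def by (intro ext) auto

lemma rmat_block_diag: "rmat_block a (rmat_diag c) = rmat_diag (\<lambda>i. if i = 0 then a else c (i - 1))"
  unfolding rmat_block_def rmat_diag_def by (intro ext) auto

lemma rmat_block_cong: "rmat_eq n X Y \<Longrightarrow> rmat_eq (Suc n) (rmat_block a X) (rmat_block a Y)"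
  unfolding rmat_eq_def rmat_block_def by auto

lemma rmat_orthogonal_block: "rmat_orthogonal n U \<Longrightarrow> rmat_orthogonal (Suc n) (rmat_block 1 U)"
  unfolding rmat_orthogonal_def rmat_transpose_block rmat_block_mult
  using rmat_block_cong[of n _ rmat_one 1] by (simp add: rmat_block_diag)

lemma rmat_eq_blockI:
  assumes "\<forall>i<Suc n. A i 0 = (if i = 0 then a else 0)" and "\<forall>j<Suc n. A 0 j = (if j = 0 then a else 0)"
  shows "rmat_eq (Suc n) A (rmat_block a (\<lambda>i j. A (Suc i) (Suc j)))"
  unfolding rmat_eq_def rmat_block_def
proof (intro allI impI)
  fix i j assume "i < Suc n" "j < Suc n"
  then show "A i j = (if i = 0 \<and> j = 0 then a else if i = 0 \<or> j = 0 then 0 else A (Suc (i - 1)) (Suc (j - 1)))"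
    using assms by (cases i; cases j) auto
qed

lemma rmat_block_diagonalize:
  assumes K: "rmat_eq (Suc n) K (rmat_block a K1)"
    and diag: "rmat_eq n (rmat_mult n (rmat_mult n (rmat_transpose U) K1) V) (rmat_diag c)"
  shows "rmat_eq (Suc n) (rmat_mult (Suc n) (rmat_mult (Suc n) (rmat_transpose (rmat_block 1 U)) K) (rmat_block 1 V))
    (rmat_diag (\<lambda>i. if i = 0 then a else c (i - 1)))"
proof -
  have "rmat_eq (Suc n) (rmat_mult (Suc n) (rmat_mult (Suc n) (rmat_transpose (rmat_block 1 U)) K) (rmat_block 1 V))
    (rmat_mult (Suc n) (rmat_block 1 (rmat_transpose U)) (rmat_mult (Suc n) (rmat_block a K1) (rmat_block 1 V)))"
    unfolding rmat_transpose_block rmat_mult_assoc by (intro rmat_mult_cong K rmat_eq_refl)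
  also have "rmat_eq (Suc n) \<dots> (rmat_block a (rmat_mult n (rmat_mult n (rmat_transpose U) K1) V))"
    by (simp add: rmat_block_mult rmat_mult_assoc)
  also have "rmat_eq (Suc n) \<dots> (rmat_diag (\<lambda>i. if i = 0 then a else c (i - 1)))"
    unfolding rmat_block_diag[symmetric] by (rule rmat_block_cong[OF diag])
  finally show ?thesis .
qed

text \<open>For a unit vector u other than e0, with w = e0 - u and |w|^2 = 2 (1 - u 0), this is the
  reflection I - 2 w w^T / |w|^2, which swaps e0 and u.\<close>
definition householder :: "(nat \<Rightarrow> real) \<Rightarrow> rmat" where
  "householder u = (if u 0 = 1 then rmat_one
     else (\<lambda>i j. rmat_one i j - (rmat_one i 0 - u i) * (rmat_one j 0 - u j) / (1 - u 0)))"

lemma householder_symmetric: "rmat_transpose (householder u) = householder u"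
  unfolding householder_def rmat_transpose_def rmat_diag_def by (intro ext) (simp add: mult.commute)

lemma unit_vector_first_one:
  fixes u :: "nat \<Rightarrow> real"
  assumes u: "(\<Sum>k<n. (u k)\<^sup>2) = 1" and u0: "u 0 = 1" and i: "i < n" "i \<noteq> 0"
  shows "u i = 0"
proof -
  have "(\<Sum>k<n. (u k)\<^sup>2) = (u 0)\<^sup>2 + (\<Sum>k\<in>{..<n} - {0}. (u k)\<^sup>2)"
    using i by (subst sum.remove[of _ 0]) auto
  then have "(\<Sum>k\<in>{..<n} - {0}. (u k)\<^sup>2) = 0"
    using u u0 by simp
  then have "(u i)\<^sup>2 = 0"
    using sum_nonneg_eq_0_iff[of "{..<n} - {0}" "\<lambda>k. (u k)\<^sup>2"] i by auto
  then show ?thesis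
    by simp
qed

context
  fixes n :: nat and u :: "nat \<Rightarrow> real"
  assumes unit: "(\<Sum>k<n. (u k)\<^sup>2) = 1"
begin

lemma householder_col0: "i < n \<Longrightarrow> householder u i 0 = u i"
  using unit_vector_first_one[OF unit, of i]
  by (cases "u 0 = 1"; cases "i = 0") (auto simp: householder_def rmat_diag_def field_simps)

lemma sum_square_e0_diff: "(\<Sum>k<n. (rmat_one k 0 - u k)\<^sup>2) = 2 * (1 - u 0)"
proof (cases "n = 0")
  case True
  then show ?thesis
    using unit by simp
next
  case False
  have "(\<Sum>k<n. (rmat_one k 0 - u k)\<^sup>2) =
      (\<Sum>k<n. rmat_one 0 k * rmat_one k 0) - 2 * (\<Sum>k<n. rmat_one 0 k * u k) + (\<Sum>k<n. (u k)\<^sup>2)"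
    by (simp add: power2_eq_square algebra_simps sum.distrib sum_subtractf sum_distrib_left rmat_diag_def)
  also have "\<dots> = 2 * (1 - u 0)"
    using False unit by (simp add: sum_rmat_diag_left) (simp add: rmat_diag_def)
  finally show ?thesis .
qed

lemma householder_square: "rmat_eq n (rmat_mult n (householder u) (householder u)) rmat_one"
proof (cases "u 0 = 1")
  case True
  then show ?thesis
    unfolding householder_def by (simp add: rmat_mult_one_left)
next
  case False
  define d where "d = 1 - u 0"
  define w where "w = (\<lambda>k. rmat_one k 0 - u k)"
  have d: "d \<noteq> 0"
    using False unfolding d_def by simp
  have H: "householder u = (\<lambda>i j. rmat_one i j - w i * w j / d)"
    unfolding householder_def w_def d_def using False by simp
  have w2: "(\<Sum>k<n. (w k)\<^sup>2) = 2 * d"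
    unfolding w_def d_def by (rule sum_square_e0_diff)
  show ?thesis
    unfolding rmat_eq_def
  proof (intro allI impI)
    fix i j assume i: "i < n" and j: "j < n"
    have "rmat_mult n (householder u) (householder u) i j = (\<Sum>k<n. rmat_one i k * rmat_one k j
        - (w i / d) * (w k * rmat_one k j) - (w j / d) * (rmat_one i k * w k) + (w i * w j / d\<^sup>2) * (w k)\<^sup>2)"
      unfolding H rmat_mult_def using d by (intro sum.cong) (auto simp: field_simps power2_eq_square)
    also have "\<dots> = rmat_one i j - (w i / d) * w j - (w j / d) * w i + (w i * w j / d\<^sup>2) * (2 * d)"
      using sum_rmat_diag_left[OF i, of _ "\<lambda>k. rmat_one k j"] sum_rmat_diag_left[OF i, of _ w]
        sum_rmat_diag_right[OF j, of w]
      by (simp only: sum.distrib sum_subtractf sum_distrib_left[symmetric] w2 mult_1)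
    also have "\<dots> = rmat_one i j"
      using d by (simp add: field_simps power2_eq_square)
    finally show "rmat_mult n (householder u) (householder u) i j = rmat_one i j" .
  qed
qed

lemma householder_orthogonal: "rmat_orthogonal n (householder u)"
  unfolding rmat_orthogonal_def householder_symmetric using householder_square by simp

lemma householder_unit_to_e0:
  assumes "i < n" shows "(\<Sum>k<n. householder u i k * u k) = (if i = 0 then 1 else 0)"
proof -
  have "(\<Sum>k<n. householder u i k * u k) = rmat_mult n (householder u) (householder u) i 0"
    unfolding rmat_mult_def by (simp add: householder_col0)
  also have "\<dots> = rmat_one i 0"
    using assms by (intro rmat_eqD[OF householder_square]) auto
  finally show ?thesis
    by (simp add: rmat_diag_def)
qed

end

section \<open>Singular value decomposition of real square matrices\<close>

lemma real_symmetric_eigenvalue_real: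
  fixes M :: rmat and w :: "nat \<Rightarrow> complex"
  assumes sym: "\<forall>i<n. \<forall>j<n. M i j = M j i" and w: "\<exists>i<n. w i \<noteq> 0"
    and ev: "\<forall>i<n. (\<Sum>j<n. of_real (M i j) * w j) = e * w i"
  shows "Im e = 0"
proof -
  define S where "S = (\<Sum>i<n. cnj (w i) * (\<Sum>j<n. of_real (M i j) * w j))"
  define N where "N = (\<Sum>i<n. (cmod (w i))\<^sup>2)"
  have "S = e * of_real N"
  proof -
    have "cnj z * z = of_real ((cmod z)\<^sup>2)" for z
      by (metis complex_norm_square mult.commute)
    then show ?thesis
      unfolding S_def N_def using ev by (simp add: sum_distrib_left mult.left_commute)
  qed
  moreover have "cnj S = S"
  proof -
    have "cnj S = (\<Sum>i<n. \<Sum>j<n. of_real (M j i) * (w i * cnj (w j)))"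
      unfolding S_def using sym by (simp add: sum_distrib_left mult.assoc mult.left_commute)
    also have "\<dots> = S"
      unfolding S_def by (subst sum.swap) (simp add: sum_distrib_left ac_simps)
    finally show ?thesis .
  qed
  moreover have "N > 0"
  proof -
    obtain i where "i < n" "w i \<noteq> 0"
      using w by blast
    then have "(cmod (w i))\<^sup>2 \<le> N" "(cmod (w i))\<^sup>2 > 0"
      unfolding N_def by (auto intro: member_le_sum)
    then show ?thesis
      by linarith
  qed
  ultimately have "cnj e * of_real N = e * of_real N"
    by (metis complex_cnj_complex_of_real complex_cnj_mult)
  then have "cnj e = e"
    using \<open>N > 0\<close> by simp
  then show ?thesis
    by (metis cnj.simps(2) neg_equal_zero)
qed

lemma real_matrix_complex_eigenvector:
  fixes M :: rmat
  assumes n: "0 < n"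
  obtains e w where "\<exists>i<n. w i \<noteq> 0" and "\<forall>i<n. (\<Sum>j<n. complex_of_real (M i j) * w j) = e * w i"
proof -
  define A where "A = mat n n (\<lambda>(i, j). complex_of_real (M i j))"
  have A: "A \<in> carrier_mat n n"
    unfolding A_def by simp
  obtain e where "e \<in> spectrum A"
    using spectrum_non_empty[OF A n] by blast
  then obtain w where "eigenvector A w e"
    unfolding spectrum_def eigenvalue_def by blast
  then have w: "w \<in> carrier_vec n" and w0: "w \<noteq> 0\<^sub>v n" and Aw: "A *\<^sub>v w = e \<cdot>\<^sub>v w"
    unfolding eigenvector_def using A by auto
  have "\<exists>i<n. w $ i \<noteq> 0"
    using w w0 by (metis eq_vecI index_zero_vec carrier_vecD)
  moreover have "\<forall>i<n. (\<Sum>j<n. of_real (M i j) * w $ j) = e * w $ i"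
  proof (intro allI impI)
    fix i assume "i < n"
    then show "(\<Sum>j<n. of_real (M i j) * w $ j) = e * w $ i"
      using arg_cong[OF Aw, of "\<lambda>x. x $ i"] w unfolding A_def
      by (simp add: scalar_prod_def atLeast0LessThan)
  qed
  ultimately show ?thesis
    by (rule that)
qed

text \<open>The real or the imaginary part of a complex eigenvector is a real one, since the eigenvalue is real.\<close>
lemma real_symmetric_eigenvector:
  fixes M :: rmat
  assumes n: "0 < n" and sym: "\<forall>i<n. \<forall>j<n. M i j = M j i"
  obtains lam v where "\<exists>i<n. v i \<noteq> 0" and "\<forall>i<n. (\<Sum>j<n. M i j * v j) = lam * v i"
proof -
  obtain e w where w: "\<exists>i<n. w i \<noteq> 0" and ev: "\<forall>i<n. (\<Sum>j<n. complex_of_real (M i j) * w j) = e * w i"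
    by (rule real_matrix_complex_eigenvector[OF n])
  have Ime: "Im e = 0"
    by (rule real_symmetric_eigenvalue_real[OF sym w ev])
  have re: "\<forall>i<n. (\<Sum>j<n. M i j * Re (w j)) = Re e * Re (w i)"
    and im: "\<forall>i<n. (\<Sum>j<n. M i j * Im (w j)) = Re e * Im (w i)"
  proof (safe)
    fix i assume "i < n"
    then have "Re (\<Sum>j<n. complex_of_real (M i j) * w j) = Re (e * w i)"
      and "Im (\<Sum>j<n. complex_of_real (M i j) * w j) = Im (e * w i)"
      using ev by simp_all
    then show "(\<Sum>j<n. M i j * Re (w j)) = Re e * Re (w i)"
      and "(\<Sum>j<n. M i j * Im (w j)) = Re e * Im (w i)"
      using Ime by (simp_all add: Re_sum Im_sum)
  qed
  obtain i0 where i0: "i0 < n" "w i0 \<noteq> 0"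
    using w by blast
  show ?thesis
  proof (cases "Re (w i0) = 0")
    case True
    with i0 have "Im (w i0) \<noteq> 0"
      by (simp add: complex_eq_iff)
    with i0 show ?thesis
      using that[of "\<lambda>j. Im (w j)" "Re e"] im by blast
  next
    case False
    with i0 show ?thesis
      using that[of "\<lambda>j. Re (w j)" "Re e"] re by blast
  qed
qed

lemma normalize_nonzero_vector:
  fixes v :: "nat \<Rightarrow> real"
  assumes "\<exists>i<n. v i \<noteq> 0"
  obtains s where "s > 0" and "(\<Sum>k<n. (v k / s)\<^sup>2) = 1"
proof -
  obtain i where i: "i < n" "v i \<noteq> 0"
    using assms by blast
  have "(v i)\<^sup>2 \<le> (\<Sum>k<n. (v k)\<^sup>2)" "(v i)\<^sup>2 > 0"
    using i by (auto intro: member_le_sum)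
  then have pos: "(\<Sum>k<n. (v k)\<^sup>2) > 0"
    by linarith
  have "(\<Sum>k<n. (v k / sqrt (\<Sum>k<n. (v k)\<^sup>2))\<^sup>2) = 1"
    using pos by (simp add: power_divide sum_divide_distrib[symmetric])
  then show ?thesis
    using that[of "sqrt (\<Sum>k<n. (v k)\<^sup>2)"] pos by simp
qed

lemma transpose_kernel_nonzero:
  fixes K :: rmat
  assumes v: "\<exists>i<n. v i \<noteq> 0" and Kv: "\<forall>i<n. (\<Sum>k<n. K i k * v k) = 0"
  obtains u where "\<exists>i<n. u i \<noteq> 0" and "\<forall>i<n. (\<Sum>k<n. K k i * u k) = 0"
proof -
  define Km where "Km = mat n n (\<lambda>(i, j). K i j)"
  have Km: "Km \<in> carrier_mat n n"
    unfolding Km_def by simp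
  have "vec n v \<noteq> 0\<^sub>v n"
    using v by (metis index_vec index_zero_vec(1))
  moreover have "Km *\<^sub>v vec n v = 0\<^sub>v n"
    using Kv by (intro eq_vecI) (auto simp: Km_def scalar_prod_def atLeast0LessThan)
  ultimately have "det Km = 0"
    using det_0_iff_vec_prod_zero_field[OF Km] vec_carrier by blast
  then have "det (transpose_mat Km) = 0"
    using det_transpose[OF Km] by simp
  then obtain w where w: "w \<in> carrier_vec n" "w \<noteq> 0\<^sub>v n" "transpose_mat Km *\<^sub>v w = 0\<^sub>v n"
    using det_0_iff_vec_prod_zero_field[of "transpose_mat Km" n] Km by auto
  have "\<exists>i<n. w $ i \<noteq> 0"
    using w(1,2) by (metis eq_vecI index_zero_vec carrier_vecD)
  moreover have "\<forall>i<n. (\<Sum>k<n. K k i * w $ k) = 0"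
  proof (intro allI impI)
    fix i assume "i < n"
    then show "(\<Sum>k<n. K k i * w $ k) = 0"
      using arg_cong[OF w(3), of "\<lambda>x. x $ i"] w(1) Km unfolding Km_def
      by (simp add: scalar_prod_def atLeast0LessThan)
  qed
  ultimately show ?thesis
    using that[of "\<lambda>k. w $ k"] by blast
qed

lemma transpose_kernel_unit:
  fixes K :: rmat
  assumes vn: "(\<Sum>k<n. (v k)\<^sup>2) = 1" and Kv: "\<forall>i<n. (\<Sum>k<n. K i k * v k) = 0"
  obtains u where "(\<Sum>k<n. (u k)\<^sup>2) = 1" and "\<forall>i<n. (\<Sum>k<n. K k i * u k) = 0"
proof -
  have "\<exists>i<n. v i \<noteq> 0"
  proof (rule ccontr)
    assume "\<not> (\<exists>i<n. v i \<noteq> 0)"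
    then have "(\<Sum>k<n. (v k)\<^sup>2) = 0"
      by simp
    with vn show False
      by simp
  qed
  then obtain u0 where u0: "\<exists>i<n. u0 i \<noteq> 0" and Ku0: "\<forall>i<n. (\<Sum>k<n. K k i * u0 k) = 0"
    using Kv by (rule transpose_kernel_nonzero)
  obtain t where "t > 0" and "(\<Sum>k<n. (u0 k / t)\<^sup>2) = 1"
    by (rule normalize_nonzero_vector[OF u0])
  moreover have "\<forall>i<n. (\<Sum>k<n. K k i * (u0 k / t)) = 0"
    using Ku0 by (simp add: sum_divide_distrib[symmetric])
  ultimately show ?thesis
    by (intro that[where u = "\<lambda>k. u0 k / t"])
qed

lemma sum_square_mult_vec:
  fixes K :: rmat
  shows "(\<Sum>i<n. (\<Sum>k<n. K i k * v k)\<^sup>2) = (\<Sum>k<n. v k * (\<Sum>l<n. rmat_mult n (rmat_transpose K) K k l * v l))"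
proof -
  have "(\<Sum>i<n. (\<Sum>k<n. K i k * v k)\<^sup>2) = (\<Sum>i<n. \<Sum>k<n. \<Sum>l<n. K i k * v k * (K i l * v l))"
    by (simp add: power2_eq_square sum_product)
  also have "\<dots> = (\<Sum>k<n. \<Sum>i<n. \<Sum>l<n. K i k * v k * (K i l * v l))"
    by (rule sum.swap)
  also have "\<dots> = (\<Sum>k<n. \<Sum>l<n. \<Sum>i<n. K i k * v k * (K i l * v l))"
    by (rule sum.cong[OF refl], rule sum.swap)
  also have "\<dots> = (\<Sum>k<n. v k * (\<Sum>l<n. rmat_mult n (rmat_transpose K) K k l * v l))"
    unfolding rmat_mult_def rmat_transpose_def
    by (simp add: sum_distrib_left sum_distrib_right mult.assoc mult.left_commute)
  finally show ?thesis .
qed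

lemma transpose_mult_vec:
  fixes K :: rmat
  shows "(\<Sum>k<n. K k i * (\<Sum>l<n. K k l * v l)) = (\<Sum>l<n. rmat_mult n (rmat_transpose K) K i l * v l)"
proof -
  have "(\<Sum>k<n. K k i * (\<Sum>l<n. K k l * v l)) = (\<Sum>k<n. \<Sum>l<n. K k i * K k l * v l)"
    by (simp add: sum_distrib_left mult.assoc)
  also have "\<dots> = (\<Sum>l<n. \<Sum>k<n. K k i * K k l * v l)"
    by (rule sum.swap)
  also have "\<dots> = (\<Sum>l<n. rmat_mult n (rmat_transpose K) K i l * v l)"
    unfolding rmat_mult_def rmat_transpose_def by (simp add: sum_distrib_right)
  finally show ?thesis .
qed

lemma transpose_mult_unit_eigenvector:
  fixes K :: rmat
  assumes n: "0 < n"
  obtains lam v where "(\<Sum>k<n. (v k)\<^sup>2) = 1"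
    and "\<forall>i<n. (\<Sum>j<n. rmat_mult n (rmat_transpose K) K i j * v j) = lam * v i"
proof -
  have "\<forall>i<n. \<forall>j<n. rmat_mult n (rmat_transpose K) K i j = rmat_mult n (rmat_transpose K) K j i"
    unfolding rmat_mult_def rmat_transpose_def by (simp add: mult.commute)
  then obtain lam v where v: "\<exists>i<n. v i \<noteq> 0"
    and Mv: "\<forall>i<n. (\<Sum>j<n. rmat_mult n (rmat_transpose K) K i j * v j) = lam * v i"
    by (rule real_symmetric_eigenvector[OF n])
  obtain s where "s > 0" and "(\<Sum>k<n. (v k / s)\<^sup>2) = 1"
    by (rule normalize_nonzero_vector[OF v])
  moreover have "\<forall>i<n. (\<Sum>j<n. rmat_mult n (rmat_transpose K) K i j * (v j / s)) = lam * (v i / s)"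
    using Mv by (simp add: sum_divide_distrib[symmetric])
  ultimately show ?thesis
    by (intro that[where v = "\<lambda>k. v k / s"])
qed

text \<open>Here |K v|^2 = lam; if lam vanishes, K is singular and u is taken from the kernel of K^T.\<close>
lemma singular_pair_of_eigenvector:
  fixes K :: rmat
  assumes vn: "(\<Sum>k<n. (v k)\<^sup>2) = 1"
    and Mv: "\<forall>i<n. (\<Sum>j<n. rmat_mult n (rmat_transpose K) K i j * v j) = lam * v i"
  obtains \<sigma> u where "\<sigma> \<ge> 0" and "(\<Sum>k<n. (u k)\<^sup>2) = 1"
    and "\<forall>i<n. (\<Sum>k<n. K i k * v k) = \<sigma> * u i" and "\<forall>i<n. (\<Sum>k<n. K k i * u k) = \<sigma> * v i"
proof -
  define Kv where "Kv = (\<lambda>i. \<Sum>k<n. K i k * v k)"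
  have norm_Kv: "(\<Sum>i<n. (Kv i)\<^sup>2) = lam"
  proof -
    have "(\<Sum>i<n. (Kv i)\<^sup>2) = (\<Sum>k<n. lam * (v k)\<^sup>2)"
      unfolding Kv_def sum_square_mult_vec using Mv
      by (intro sum.cong) (simp_all add: power2_eq_square)
    also have "\<dots> = lam"
      using vn by (simp add: sum_distrib_left[symmetric])
    finally show ?thesis .
  qed
  have KtKv: "\<forall>i<n. (\<Sum>k<n. K k i * Kv k) = lam * v i"
    unfolding Kv_def transpose_mult_vec using Mv by blast
  show ?thesis
  proof (cases "lam = 0")
    case False
    then have lam: "lam > 0"
      using norm_Kv[symmetric] by (simp add: sum_nonneg order_le_neq_trans)
    define \<sigma> where "\<sigma> = sqrt lam"
    have \<sigma>: "\<sigma> > 0" "\<sigma> * \<sigma> = lam"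
      unfolding \<sigma>_def using lam by simp_all
    have "(\<Sum>k<n. (Kv k / \<sigma>)\<^sup>2) = 1"
      using norm_Kv lam \<sigma> by (simp add: power_divide sum_divide_distrib[symmetric] power2_eq_square)
    moreover have "\<forall>i<n. (\<Sum>k<n. K k i * (Kv k / \<sigma>)) = \<sigma> * v i"
      using KtKv \<sigma> by (simp add: sum_divide_distrib[symmetric] field_simps)
    ultimately show ?thesis
      using that[of \<sigma> "\<lambda>i. Kv i / \<sigma>"] \<sigma> unfolding Kv_def by simp
  next
    case True
    then have Kv0: "\<forall>i<n. (\<Sum>k<n. K i k * v k) = 0"
      using norm_Kv sum_nonneg_eq_0_iff[of "{..<n}" "\<lambda>i. (Kv i)\<^sup>2"] unfolding Kv_def by simp
    obtain u where "(\<Sum>k<n. (u k)\<^sup>2) = 1" and "\<forall>i<n. (\<Sum>k<n. K k i * u k) = 0"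
      by (rule transpose_kernel_unit[OF vn Kv0])
    with Kv0 show ?thesis
      using that[of 0 u] by simp
  qed
qed

lemma singular_pair:
  fixes K :: rmat
  assumes n: "0 < n"
  obtains \<sigma> u v where "\<sigma> \<ge> 0" and "(\<Sum>k<n. (u k)\<^sup>2) = 1" and "(\<Sum>k<n. (v k)\<^sup>2) = 1"
    and "\<forall>i<n. (\<Sum>k<n. K i k * v k) = \<sigma> * u i" and "\<forall>i<n. (\<Sum>k<n. K k i * u k) = \<sigma> * v i"
proof -
  obtain lam v where vn: "(\<Sum>k<n. (v k)\<^sup>2) = 1"
    and Mv: "\<forall>i<n. (\<Sum>j<n. rmat_mult n (rmat_transpose K) K i j * v j) = lam * v i"
    by (rule transpose_mult_unit_eigenvector[OF n])
  obtain \<sigma> u where "\<sigma> \<ge> 0" and "(\<Sum>k<n. (u k)\<^sup>2) = 1"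
    and "\<forall>i<n. (\<Sum>k<n. K i k * v k) = \<sigma> * u i" and "\<forall>i<n. (\<Sum>k<n. K k i * u k) = \<sigma> * v i"
    by (rule singular_pair_of_eigenvector[OF vn Mv])
  with vn show ?thesis
    by (intro that)
qed

lemma householder_deflation:
  fixes K :: rmat
  assumes un: "(\<Sum>k<n. (u k)\<^sup>2) = 1" and vn: "(\<Sum>k<n. (v k)\<^sup>2) = 1"
    and Kv: "\<forall>i<n. (\<Sum>k<n. K i k * v k) = \<sigma> * u i" and Ku: "\<forall>i<n. (\<Sum>k<n. K k i * u k) = \<sigma> * v i"
  defines "K' \<equiv> rmat_mult n (rmat_mult n (householder u) K) (householder v)"
  shows "\<forall>i<n. K' i 0 = (if i = 0 then \<sigma> else 0)" and "\<forall>j<n. K' 0 j = (if j = 0 then \<sigma> else 0)"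
proof (safe)
  fix i assume i: "i < n"
  have "K' i 0 = (\<Sum>k<n. householder u i k * (\<Sum>l<n. K k l * householder v l 0))"
    unfolding K'_def rmat_mult_assoc by (simp add: rmat_mult_def)
  also have "\<dots> = \<sigma> * (\<Sum>k<n. householder u i k * u k)"
    using Kv householder_col0[OF vn] by (simp add: sum_distrib_left mult.left_commute)
  also have "\<dots> = (if i = 0 then \<sigma> else 0)"
    using householder_unit_to_e0[OF un i] by simp
  finally show "K' i 0 = (if i = 0 then \<sigma> else 0)" .
next
  fix j assume j: "j < n"
  have u_row: "householder u 0 k = u k" if "k < n" for k
    using householder_col0[OF un that] fun_cong[OF fun_cong[OF householder_symmetric[of u], of 0], of k]
    unfolding rmat_transpose_def by simp
  have "K' 0 j = (\<Sum>l<n. (\<Sum>k<n. u k * K k l) * householder v l j)"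
    unfolding K'_def by (simp add: rmat_mult_def u_row)
  also have "\<dots> = \<sigma> * (\<Sum>l<n. householder v j l * v l)"
    using Ku fun_cong[OF fun_cong[OF householder_symmetric[of v]]]
    unfolding rmat_transpose_def by (simp add: sum_distrib_left ac_simps)
  also have "\<dots> = (if j = 0 then \<sigma> else 0)"
    using householder_unit_to_e0[OF vn j] by simp
  finally show "K' 0 j = (if j = 0 then \<sigma> else 0)" .
qed

text \<open>Induction on n: conjugating K by the Householder reflections of a singular pair splits off
  a 1 x 1 block.\<close>
lemma real_svd:
  fixes K :: rmat
  shows "\<exists>U V c. rmat_orthogonal n U \<and> rmat_orthogonal n V \<and> (\<forall>i. c i \<ge> 0) \<and>
     rmat_eq n (rmat_mult n (rmat_mult n (rmat_transpose U) K) V) (rmat_diag c)"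
proof (induction n arbitrary: K)
  case 0
  show ?case
    by (auto simp: rmat_orthogonal_def rmat_eq_def)
next
  case (Suc n)
  obtain \<sigma> u v where \<sigma>: "\<sigma> \<ge> 0" and un: "(\<Sum>k<Suc n. (u k)\<^sup>2) = 1" and vn: "(\<Sum>k<Suc n. (v k)\<^sup>2) = 1"
    and Kv: "\<forall>i<Suc n. (\<Sum>k<Suc n. K i k * v k) = \<sigma> * u i"
    and Ku: "\<forall>i<Suc n. (\<Sum>k<Suc n. K k i * u k) = \<sigma> * v i"
    by (rule singular_pair[OF zero_less_Suc])
  define K' where "K' = rmat_mult (Suc n) (rmat_mult (Suc n) (householder u) K) (householder v)"
  define K1 where "K1 = (\<lambda>i j. K' (Suc i) (Suc j))"
  have K'_block: "rmat_eq (Suc n) K' (rmat_block \<sigma> K1)"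
    unfolding K1_def using householder_deflation[OF un vn Kv Ku] unfolding K'_def[symmetric]
    by (rule rmat_eq_blockI)
  obtain U1 V1 c1 where U1: "rmat_orthogonal n U1" and V1: "rmat_orthogonal n V1" and c1: "\<forall>i. c1 i \<ge> 0"
    and diag1: "rmat_eq n (rmat_mult n (rmat_mult n (rmat_transpose U1) K1) V1) (rmat_diag c1)"
    using Suc.IH by blast
  define U where "U = rmat_mult (Suc n) (householder u) (rmat_block 1 U1)"
  define V where "V = rmat_mult (Suc n) (householder v) (rmat_block 1 V1)"
  have "rmat_eq (Suc n) (rmat_mult (Suc n) (rmat_mult (Suc n) (rmat_transpose U) K) V)
     (rmat_mult (Suc n) (rmat_mult (Suc n) (rmat_transpose (rmat_block 1 U1)) K') (rmat_block 1 V1))"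
    unfolding U_def V_def K'_def rmat_transpose_mult householder_symmetric by (simp add: rmat_mult_assoc)
  also have "rmat_eq (Suc n) \<dots> (rmat_diag (\<lambda>i. if i = 0 then \<sigma> else c1 (i - 1)))"
    by (rule rmat_block_diagonalize[OF K'_block diag1])
  finally have "rmat_eq (Suc n) (rmat_mult (Suc n) (rmat_mult (Suc n) (rmat_transpose U) K) V)
     (rmat_diag (\<lambda>i. if i = 0 then \<sigma> else c1 (i - 1)))" .
  moreover have "rmat_orthogonal (Suc n) U" "rmat_orthogonal (Suc n) V"
    unfolding U_def V_def using un vn U1 V1
    by (intro rmat_orthogonal_mult householder_orthogonal rmat_orthogonal_block; simp)+
  ultimately show ?case
    using \<sigma> c1 by (intro exI[of _ U] exI[of _ V] exI[of _ "\<lambda>i. if i = 0 then \<sigma> else c1 (i - 1)"]) auto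
qed

lemma sorting_permutation:
  fixes c :: "nat \<Rightarrow> real"
  obtains p where "bij_betw p {..<n} {..<n}" and "\<forall>i j. i \<le> j \<and> j < n \<longrightarrow> c (p j) \<le> c (p i)"
proof -
  define xs where "xs = sort_key (\<lambda>i. - c i) [0..<n]"
  have len: "length xs = n" and dist: "distinct xs" and set: "set xs = {..<n}"
    and sorted: "sorted (map (\<lambda>i. - c i) xs)"
    unfolding xs_def by auto
  have "bij_betw (\<lambda>i. xs ! i) {..<n} {..<n}"
  proof (rule bij_betw_imageI)
    show "inj_on (\<lambda>i. xs ! i) {..<n}"
      using dist len by (simp add: inj_on_def nth_eq_iff_index_eq)
    show "(\<lambda>i. xs ! i) ` {..<n} = {..<n}"
      using set len by (metis atLeast0LessThan atLeast_upt image_set map_nth set_map)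
  qed
  moreover have "c (xs ! j) \<le> c (xs ! i)" if "i \<le> j" "j < n" for i j
    using sorted_nth_mono[OF sorted, of i j] that len by simp
  ultimately show ?thesis
    using that by blast
qed

lemma real_svd_sorted:
  fixes K :: rmat
  shows "\<exists>U V c. rmat_orthogonal n U \<and> rmat_orthogonal n V \<and> (\<forall>i. c i \<ge> 0) \<and>
     (\<forall>i j. i \<le> j \<and> j < n \<longrightarrow> c j \<le> c i) \<and>
     rmat_eq n (rmat_mult n (rmat_mult n (rmat_transpose U) K) V) (rmat_diag c)"
proof -
  obtain U V c where U: "rmat_orthogonal n U" and V: "rmat_orthogonal n V" and c: "\<forall>i. c i \<ge> 0"
    and diag: "rmat_eq n (rmat_mult n (rmat_mult n (rmat_transpose U) K) V) (rmat_diag c)"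
    using real_svd by blast
  obtain p where p: "bij_betw p {..<n} {..<n}" and mono: "\<forall>i j. i \<le> j \<and> j < n \<longrightarrow> c (p j) \<le> c (p i)"
    by (rule sorting_permutation)
  have "rmat_eq n (rmat_mult n (rmat_mult n (rmat_transpose (\<lambda>k i. U k (p i))) K) (\<lambda>k i. V k (p i)))
    (rmat_diag (\<lambda>i. c (p i)))"
    unfolding rmat_eq_def
  proof (intro allI impI)
    fix i j assume "i < n" "j < n"
    moreover from this have "p i < n" "p j < n" "p i = p j \<longleftrightarrow> i = j"
      using p by (auto simp: bij_betw_def inj_on_def)
    ultimately show "rmat_mult n (rmat_mult n (rmat_transpose (\<lambda>k i. U k (p i))) K) (\<lambda>k i. V k (p i)) i j =
      rmat_diag (\<lambda>i. c (p i)) i j"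
      using rmat_eqD[OF diag, of "p i" "p j"]
      by (simp add: rmat_mult_def rmat_transpose_def rmat_diag_def)
  qed
  then show ?thesis
    using rmat_orthogonal_permute_cols[OF U p] rmat_orthogonal_permute_cols[OF V p] c mono
    by (intro exI[of _ "\<lambda>k i. U k (p i)"] exI[of _ "\<lambda>k i. V k (p i)"] exI[of _ "\<lambda>i. c (p i)"]) simp
qed

lemma real_svd_gram:
  fixes K :: rmat
  assumes U: "rmat_orthogonal n U" and V: "rmat_orthogonal n V"
    and diag: "rmat_eq n (rmat_mult n (rmat_mult n (rmat_transpose U) K) V) (rmat_diag c)"
  shows "rmat_eq n (rmat_mult n (rmat_transpose K) K)
    (rmat_mult n (rmat_mult n V (rmat_diag (\<lambda>i. (c i)\<^sup>2))) (rmat_transpose V))"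
proof -
  define G where "G = rmat_mult n (rmat_transpose K) K"
  define D where "D = rmat_mult n (rmat_mult n (rmat_transpose U) K) V"
  have "rmat_eq n (rmat_mult n (rmat_transpose V) (rmat_mult n G V))
    (rmat_mult n (rmat_transpose V) (rmat_mult n (rmat_transpose K) (rmat_mult n K V)))"
    unfolding G_def by (simp add: rmat_mult_assoc)
  also have "rmat_eq n \<dots>
    (rmat_mult n (rmat_transpose V) (rmat_mult n (rmat_transpose K) (rmat_mult n U (rmat_mult n (rmat_transpose U) (rmat_mult n K V)))))"
    by (rule rmat_mult_cong[OF rmat_eq_refl rmat_mult_cong[OF rmat_eq_refl rmat_eq_sym[OF rmat_orthogonal_cancel_left'[OF U]]]])
  also have "rmat_eq n \<dots> (rmat_mult n (rmat_transpose D) D)"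
    unfolding D_def by (simp add: rmat_transpose_mult rmat_mult_assoc)
  also have "rmat_eq n \<dots> (rmat_mult n (rmat_diag c) (rmat_diag c))"
    using diag unfolding D_def[symmetric]
    by (metis rmat_mult_cong rmat_transpose_cong rmat_transpose_diag)
  also have "rmat_eq n \<dots> (rmat_diag (\<lambda>i. (c i)\<^sup>2))"
    using rmat_mult_diag_diag by (simp add: power2_eq_square)
  finally have VGV: "rmat_eq n (rmat_mult n (rmat_transpose V) (rmat_mult n G V)) (rmat_diag (\<lambda>i. (c i)\<^sup>2))" .
  have "rmat_eq n G (rmat_mult n V (rmat_mult n (rmat_transpose V) G))"
    by (rule rmat_eq_sym[OF rmat_orthogonal_cancel_left'[OF V]])
  also have "rmat_eq n \<dots> (rmat_mult n V (rmat_mult n (rmat_mult n (rmat_mult n (rmat_transpose V) G) V) (rmat_transpose V)))"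
    by (intro rmat_mult_cong rmat_eq_refl rmat_eq_sym[OF rmat_orthogonal_cancel_right[OF V]])
  also have "rmat_eq n \<dots> (rmat_mult n V (rmat_mult n (rmat_mult n (rmat_transpose V) (rmat_mult n G V)) (rmat_transpose V)))"
    by (simp add: rmat_mult_assoc)
  also have "rmat_eq n \<dots> (rmat_mult n V (rmat_mult n (rmat_diag (\<lambda>i. (c i)\<^sup>2)) (rmat_transpose V)))"
    by (intro rmat_mult_cong rmat_eq_refl VGV)
  also have "rmat_eq n \<dots> (rmat_mult n (rmat_mult n V (rmat_diag (\<lambda>i. (c i)\<^sup>2))) (rmat_transpose V))"
    by (simp add: rmat_mult_assoc)
  finally show ?thesis
    unfolding G_def .
qed

section \<open>Hermitian orthonormal bases of complex matrices\<close>

lemma mat_adjoint_carrier: "X \<in> carrier_mat m n \<Longrightarrow> mat_adjoint X \<in> carrier_mat n m"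
  unfolding mat_adjoint_def mat_of_rows_def by simp

lemma mat_adjoint_index:
  "X \<in> carrier_mat m n \<Longrightarrow> a < n \<Longrightarrow> b < m \<Longrightarrow> mat_adjoint X $$ (a, b) = cnj (X $$ (b, a))"
  unfolding mat_adjoint_def by (simp add: mat_of_rows_index)

lemma mat_adjoint_one: "mat_adjoint (1\<^sub>m m) = (1\<^sub>m m :: complex mat)"
proof -
  have I: "(1\<^sub>m m :: complex mat) \<in> carrier_mat m m"
    by simp
  show ?thesis
    using mat_adjoint_carrier[OF I] by (intro eq_matI) (auto simp: mat_adjoint_index[OF I])
qed

lemma hermitian_index:
  "hermitian X \<Longrightarrow> X \<in> carrier_mat m m \<Longrightarrow> a < m \<Longrightarrow> b < m \<Longrightarrow> cnj (X $$ (b, a)) = X $$ (a, b)"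
  unfolding hermitian_def by (metis mat_adjoint_index)

lemma hermitianI:
  assumes X: "X \<in> carrier_mat m m" and h: "\<forall>a<m. \<forall>b<m. cnj (X $$ (b, a)) = X $$ (a, b)"
  shows "hermitian X"
proof -
  have "mat_adjoint X = X"
    using X h mat_adjoint_carrier[OF X] by (intro eq_matI) (auto simp: mat_adjoint_index[OF X])
  then show ?thesis
    unfolding hermitian_def using X by simp
qed

lemma sum_swap_innermost:
  "(\<Sum>a\<in>A. \<Sum>b\<in>B. \<Sum>k\<in>C. f a b k) = (\<Sum>k\<in>C. \<Sum>a\<in>A. \<Sum>b\<in>B. f a b k)"
  by (subst sum.swap) (rule sum.cong[OF refl], rule sum.swap)

lemma mtrace_carrier: "Y \<in> carrier_mat m m \<Longrightarrow> mtrace Y = (\<Sum>a<m. Y $$ (a, a))"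
  unfolding mtrace_def by simp

definition hs_inner :: "nat \<Rightarrow> complex mat \<Rightarrow> complex mat \<Rightarrow> complex" where
  "hs_inner m X Y = mtrace (mat_adjoint X * Y) / of_nat m"

lemma hs_inner_entrywise:
  assumes X: "X \<in> carrier_mat m m" and Y: "Y \<in> carrier_mat m m"
  shows "hs_inner m X Y = (\<Sum>a<m. \<Sum>b<m. cnj (X $$ (a, b)) * Y $$ (a, b)) / of_nat m"
proof -
  have "mtrace (mat_adjoint X * Y) = (\<Sum>b<m. \<Sum>a<m. cnj (X $$ (a, b)) * Y $$ (a, b))"
    unfolding mtrace_def using X Y mat_adjoint_carrier[OF X]
    by (intro sum.cong) (auto simp: scalar_prod_def atLeast0LessThan mat_adjoint_index[OF X])
  also have "\<dots> = (\<Sum>a<m. \<Sum>b<m. cnj (X $$ (a, b)) * Y $$ (a, b))"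
    by (rule sum.swap)
  finally show ?thesis
    unfolding hs_inner_def by simp
qed

lemma hs_inner_one_left: "Y \<in> carrier_mat m m \<Longrightarrow> hs_inner m (1\<^sub>m m) Y = mtrace Y / of_nat m"
  unfolding hs_inner_def mat_adjoint_one by simp

definition herm_onb :: "nat \<Rightarrow> (nat \<Rightarrow> complex mat) \<Rightarrow> bool" where
  "herm_onb m A \<longleftrightarrow> (\<forall>i<m^2. A i \<in> carrier_mat m m \<and> hermitian (A i)) \<and>
     (\<forall>i<m^2. \<forall>j<m^2. hs_inner m (A i) (A j) = (if i = j then 1 else 0)) \<and>
     (\<forall>X \<in> carrier_mat m m. \<exists>c. \<forall>a<m. \<forall>b<m. X $$ (a, b) = (\<Sum>i<m^2. c i * A i $$ (a, b)))"

lemma std_onb_iff: "std_onb m A \<longleftrightarrow> herm_onb m A \<and> A 0 = 1\<^sub>m m"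
  unfolding std_onb_def herm_onb_def hs_inner_def by blast

lemma herm_onbD:
  assumes "herm_onb m A"
  shows "\<And>i. i < m^2 \<Longrightarrow> A i \<in> carrier_mat m m" and "\<And>i. i < m^2 \<Longrightarrow> hermitian (A i)"
    and "\<And>i j. i < m^2 \<Longrightarrow> j < m^2 \<Longrightarrow> hs_inner m (A i) (A j) = (if i = j then 1 else 0)"
  using assms unfolding herm_onb_def by auto

definition basis_comb :: "nat \<Rightarrow> (nat \<Rightarrow> complex) \<Rightarrow> (nat \<Rightarrow> complex mat) \<Rightarrow> complex mat" where
  "basis_comb m \<alpha> A = mat m m (\<lambda>(a, b). \<Sum>k<m^2. \<alpha> k * A k $$ (a, b))"

lemma basis_comb_carrier [simp]: "basis_comb m \<alpha> A \<in> carrier_mat m m"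
  unfolding basis_comb_def by simp

lemma basis_comb_dim [simp]: "dim_row (basis_comb m \<alpha> A) = m" "dim_col (basis_comb m \<alpha> A) = m"
  unfolding basis_comb_def by simp_all

lemma basis_comb_index [simp]:
  "a < m \<Longrightarrow> b < m \<Longrightarrow> basis_comb m \<alpha> A $$ (a, b) = (\<Sum>k<m^2. \<alpha> k * A k $$ (a, b))"
  unfolding basis_comb_def by simp

lemma hs_inner_basis_comb_right:
  assumes X: "X \<in> carrier_mat m m" and A: "\<forall>l<m^2. A l \<in> carrier_mat m m"
  shows "hs_inner m X (basis_comb m \<alpha> A) = (\<Sum>l<m^2. \<alpha> l * hs_inner m X (A l))"
proof -
  have "(\<Sum>a<m. \<Sum>b<m. cnj (X $$ (a, b)) * basis_comb m \<alpha> A $$ (a, b)) =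
        (\<Sum>a<m. \<Sum>b<m. \<Sum>l<m^2. \<alpha> l * (cnj (X $$ (a, b)) * A l $$ (a, b)))"
    by (intro sum.cong refl) (simp add: sum_distrib_left mult.left_commute)
  also have "\<dots> = (\<Sum>l<m^2. \<alpha> l * (\<Sum>a<m. \<Sum>b<m. cnj (X $$ (a, b)) * A l $$ (a, b)))"
    by (subst sum_swap_innermost) (simp add: sum_distrib_left)
  finally have "hs_inner m X (basis_comb m \<alpha> A) =
    (\<Sum>l<m^2. \<alpha> l * (\<Sum>a<m. \<Sum>b<m. cnj (X $$ (a, b)) * A l $$ (a, b))) / of_nat m"
    by (simp only: hs_inner_entrywise[OF X basis_comb_carrier])
  also have "\<dots> = (\<Sum>l<m^2. \<alpha> l * hs_inner m X (A l))"
    unfolding sum_divide_distrib using A by (intro sum.cong refl) (simp add: hs_inner_entrywise[OF X])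
  finally show ?thesis .
qed

lemma hs_inner_basis_comb_left:
  assumes Y: "Y \<in> carrier_mat m m" and A: "\<forall>k<m^2. A k \<in> carrier_mat m m"
  shows "hs_inner m (basis_comb m \<alpha> A) Y = (\<Sum>k<m^2. cnj (\<alpha> k) * hs_inner m (A k) Y)"
proof -
  have "(\<Sum>a<m. \<Sum>b<m. cnj (basis_comb m \<alpha> A $$ (a, b)) * Y $$ (a, b)) =
        (\<Sum>a<m. \<Sum>b<m. \<Sum>k<m^2. cnj (\<alpha> k) * (cnj (A k $$ (a, b)) * Y $$ (a, b)))"
    by (intro sum.cong refl) (simp add: sum_distrib_right mult.assoc)
  also have "\<dots> = (\<Sum>k<m^2. cnj (\<alpha> k) * (\<Sum>a<m. \<Sum>b<m. cnj (A k $$ (a, b)) * Y $$ (a, b)))"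
    by (subst sum_swap_innermost) (simp add: sum_distrib_left)
  finally have "hs_inner m (basis_comb m \<alpha> A) Y =
    (\<Sum>k<m^2. cnj (\<alpha> k) * (\<Sum>a<m. \<Sum>b<m. cnj (A k $$ (a, b)) * Y $$ (a, b))) / of_nat m"
    by (simp only: hs_inner_entrywise[OF basis_comb_carrier Y])
  also have "\<dots> = (\<Sum>k<m^2. cnj (\<alpha> k) * hs_inner m (A k) Y)"
    unfolding sum_divide_distrib using A by (intro sum.cong refl) (simp add: hs_inner_entrywise[OF _ Y])
  finally show ?thesis .
qed

lemma herm_onb_coeffs:
  assumes A: "herm_onb m A" and P: "P \<in> carrier_mat m m"
  shows "P = basis_comb m (\<lambda>k. hs_inner m (A k) P) A"
proof -
  obtain p where p: "\<forall>a<m. \<forall>b<m. P $$ (a, b) = (\<Sum>i<m^2. p i * A i $$ (a, b))"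
    using A P unfolding herm_onb_def by blast
  have P_eq: "P = basis_comb m p A"
    by (rule eq_matI) (use P p in auto)
  have "hs_inner m (A k) P = p k" if k: "k < m^2" for k
  proof -
    have "hs_inner m (A k) P = (\<Sum>l<m^2. p l * (if k = l then 1 else 0))"
      unfolding P_eq using herm_onbD[OF A] k by (simp add: hs_inner_basis_comb_right)
    also have "\<dots> = p k"
      using k by (simp add: if_distrib[of "\<lambda>x. _ * x"] cong: if_cong)
    finally show ?thesis .
  qed
  then show ?thesis
    unfolding P_eq basis_comb_def by (intro eq_matI) auto
qed

lemma hermitian_basis_comb_real:
  assumes A: "\<forall>k<m^2. A k \<in> carrier_mat m m \<and> hermitian (A k)"
  shows "hermitian (basis_comb m (\<lambda>k. complex_of_real (w k)) A)"
proof (rule hermitianI[OF basis_comb_carrier], intro allI impI)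
  fix a b assume "a < m" "b < m"
  then show "cnj (basis_comb m (\<lambda>k. complex_of_real (w k)) A $$ (b, a)) =
      basis_comb m (\<lambda>k. complex_of_real (w k)) A $$ (a, b)"
    using A by (simp add: hermitian_index[where m = m])
qed

lemma mat_adjoint_basis_comb:
  assumes A: "herm_onb m A"
  shows "mat_adjoint (basis_comb m p A) = basis_comb m (\<lambda>k. cnj (p k)) A"
proof (rule eq_matI)
  fix a b assume "a < dim_row (basis_comb m (\<lambda>k. cnj (p k)) A)" "b < dim_col (basis_comb m (\<lambda>k. cnj (p k)) A)"
  then have a: "a < m" and b: "b < m"
    by auto
  then show "mat_adjoint (basis_comb m p A) $$ (a, b) = basis_comb m (\<lambda>k. cnj (p k)) A $$ (a, b)"
    using herm_onbD(1,2)[OF A]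
    by (simp add: mat_adjoint_index[OF basis_comb_carrier] hermitian_index[where m = m])
qed (use mat_adjoint_carrier[OF basis_comb_carrier] in auto)

definition rotate_basis :: "nat \<Rightarrow> rmat \<Rightarrow> (nat \<Rightarrow> complex mat) \<Rightarrow> nat \<Rightarrow> complex mat" where
  "rotate_basis m W A = (\<lambda>i. basis_comb m (\<lambda>k. complex_of_real (W k i)) A)"

lemma hs_inner_rotate_basis:
  assumes A: "herm_onb m A" and i: "i < m^2" and j: "j < m^2"
  shows "hs_inner m (rotate_basis m W A i) (rotate_basis m W A j) =
    complex_of_real (rmat_mult (m^2) (rmat_transpose W) W i j)"
proof -
  have coeff: "hs_inner m (A k) (rotate_basis m W A j) = complex_of_real (W k j)" if "k < m^2" for k
  proof -
    have "hs_inner m (A k) (rotate_basis m W A j) = (\<Sum>l<m^2. complex_of_real (W l j) * (if k = l then 1 else 0))"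
      unfolding rotate_basis_def using herm_onbD[OF A] that by (simp add: hs_inner_basis_comb_right)
    also have "\<dots> = complex_of_real (W k j)"
      using that by (simp add: if_distrib[of "\<lambda>x. _ * x"] cong: if_cong)
    finally show ?thesis .
  qed
  have "hs_inner m (rotate_basis m W A i) (rotate_basis m W A j) =
    (\<Sum>k<m^2. complex_of_real (W k i) * hs_inner m (A k) (rotate_basis m W A j))"
    unfolding rotate_basis_def[of m W A] using herm_onbD[OF A] by (simp add: hs_inner_basis_comb_left)
  also have "\<dots> = complex_of_real (rmat_mult (m^2) (rmat_transpose W) W i j)"
    unfolding rmat_mult_def rmat_transpose_def by (simp add: coeff)
  finally show ?thesis .
qed

lemma rotate_basis_span:
  assumes A: "herm_onb m A" and W: "rmat_orthogonal (m^2) W" and X: "X \<in> carrier_mat m m"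
  shows "\<exists>d. \<forall>a<m. \<forall>b<m. X $$ (a, b) = (\<Sum>i<m^2. d i * rotate_basis m W A i $$ (a, b))"
proof -
  obtain c where c: "\<forall>a<m. \<forall>b<m. X $$ (a, b) = (\<Sum>k<m^2. c k * A k $$ (a, b))"
    using A X unfolding herm_onb_def by blast
  define d where "d = (\<lambda>i. \<Sum>k<m^2. c k * complex_of_real (W k i))"
  have "X $$ (a, b) = (\<Sum>i<m^2. d i * rotate_basis m W A i $$ (a, b))" if "a < m" "b < m" for a b
  proof -
    have "(\<Sum>i<m^2. d i * rotate_basis m W A i $$ (a, b)) =
      (\<Sum>i<m^2. \<Sum>k<m^2. \<Sum>l<m^2. c k * (complex_of_real (W k i * W l i) * A l $$ (a, b)))"
      unfolding d_def rotate_basis_def using that by (simp add: sum_product mult.assoc mult.left_commute)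
    also have "\<dots> = (\<Sum>k<m^2. \<Sum>l<m^2. \<Sum>i<m^2. c k * (complex_of_real (W k i * W l i) * A l $$ (a, b)))"
      by (subst sum_swap_innermost, subst sum_swap_innermost) (rule refl)
    also have "\<dots> = (\<Sum>k<m^2. c k * (\<Sum>l<m^2. complex_of_real (rmat_mult (m^2) W (rmat_transpose W) k l) * A l $$ (a, b)))"
      unfolding rmat_mult_def rmat_transpose_def by (simp add: sum_distrib_left sum_distrib_right mult.assoc)
    also have "\<dots> = (\<Sum>k<m^2. c k * (\<Sum>l<m^2. complex_of_real (rmat_one k l) * A l $$ (a, b)))"
      using W unfolding rmat_orthogonal_def rmat_eq_def by simp
    also have "\<dots> = (\<Sum>k<m^2. c k * A k $$ (a, b))"
    proof (intro sum.cong refl)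
      fix k assume "k \<in> {..<m^2}"
      moreover have "(\<Sum>l<m^2. complex_of_real (rmat_one k l) * A l $$ (a, b)) =
          (\<Sum>l<m^2. if l = k then A k $$ (a, b) else 0)"
        by (rule sum.cong) (auto simp: rmat_diag_def)
      ultimately show "c k * (\<Sum>l<m^2. complex_of_real (rmat_one k l) * A l $$ (a, b)) = c k * A k $$ (a, b)"
        by simp
    qed
    finally show ?thesis
      using c that by simp
  qed
  then show ?thesis
    by blast
qed

lemma herm_onb_rotate_basis:
  assumes A: "herm_onb m A" and W: "rmat_orthogonal (m^2) W"
  shows "herm_onb m (rotate_basis m W A)"
  unfolding herm_onb_def
proof (intro conjI allI impI ballI)
  fix i assume "i < m^2"
  show "rotate_basis m W A i \<in> carrier_mat m m"
    unfolding rotate_basis_def by simp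
  show "hermitian (rotate_basis m W A i)"
    unfolding rotate_basis_def using herm_onbD(1,2)[OF A] by (intro hermitian_basis_comb_real) simp
next
  fix i j assume ij: "i < m^2" "j < m^2"
  have "rmat_mult (m^2) (rmat_transpose W) W i j = rmat_one i j"
    using W ij unfolding rmat_orthogonal_def rmat_eq_def by simp
  then show "hs_inner m (rotate_basis m W A i) (rotate_basis m W A j) = (if i = j then 1 else 0)"
    using hs_inner_rotate_basis[OF A ij] by (simp add: rmat_diag_def)
next
  fix X :: "complex mat" assume "X \<in> carrier_mat m m"
  then show "\<exists>d. \<forall>a<m. \<forall>b<m. X $$ (a, b) = (\<Sum>i<m^2. d i * rotate_basis m W A i $$ (a, b))"
    by (rule rotate_basis_span[OF A W])
qed

lemma rotate_basis_first:
  assumes A: "\<forall>k<m^2. A k \<in> carrier_mat m m" and W: "\<forall>k<m^2. W k 0 = rmat_one k 0" and m: "0 < m"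
  shows "rotate_basis m W A 0 = A 0"
proof -
  have A0: "A 0 \<in> carrier_mat m m"
    using A m by simp
  have "(\<Sum>k<m^2. complex_of_real (W k 0) * A k $$ (a, b)) = A 0 $$ (a, b)" for a b
  proof -
    have "(\<Sum>k<m^2. complex_of_real (W k 0) * A k $$ (a, b)) = (\<Sum>k<m^2. if k = 0 then A 0 $$ (a, b) else 0)"
      using W by (intro sum.cong) (auto simp: rmat_diag_def)
    then show ?thesis
      using m by simp
  qed
  then show ?thesis
    unfolding rotate_basis_def using A0 by (intro eq_matI) auto
qed

lemma std_onb_rotate_basis:
  assumes A: "std_onb m A" and W: "rmat_orthogonal (m^2) W" "\<forall>k<m^2. W k 0 = rmat_one k 0" and m: "0 < m"
  shows "std_onb m (rotate_basis m W A)"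
proof -
  have "herm_onb m A" and "A 0 = 1\<^sub>m m"
    using A unfolding std_onb_iff by auto
  moreover from this have "rotate_basis m W A 0 = A 0"
    using herm_onbD(1) W(2) m by (intro rotate_basis_first) auto
  ultimately show ?thesis
    unfolding std_onb_iff using herm_onb_rotate_basis W(1) by simp
qed

section \<open>Existence of a standard orthonormal basis\<close>

lemma sum_lessThan_mult_split:
  fixes f :: "nat \<Rightarrow> 'a::comm_monoid_add"
  shows "(\<Sum>x<m * m. f x) = (\<Sum>a<m. \<Sum>b<m. f (a * m + b))"
proof -
  have "(\<Sum>x<m * m. f x) = (\<Sum>a<m. sum f {a * m..<a * m + m})"
    using sum.nat_group[of f m m] by simp
  also have "\<dots> = (\<Sum>a<m. \<Sum>b<m. f (a * m + b))"
    by (simp add: sum.atLeastLessThan_shift_0 atLeast0LessThan)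
  finally show ?thesis .
qed

lemma sum_pair_support:
  fixes f :: "nat \<Rightarrow> nat \<Rightarrow> 'a::comm_monoid_add"
  assumes a: "a < m" and b: "b < m"
    and supp: "\<forall>x<m. \<forall>y<m. f x y \<noteq> 0 \<longrightarrow> (x = a \<and> y = b) \<or> (x = b \<and> y = a)"
  shows "(\<Sum>x<m. \<Sum>y<m. f x y) = f a b + (if a = b then 0 else f b a)"
proof -
  have "(\<Sum>x<m. \<Sum>y<m. f x y) = (\<Sum>(x, y)\<in>{..<m} \<times> {..<m}. f x y)"
    by (rule sum.cartesian_product)
  also have "\<dots> = (\<Sum>(x, y)\<in>{(a, b), (b, a)}. f x y)"
    using a b supp by (intro sum.mono_neutral_right) auto
  also have "\<dots> = f a b + (if a = b then 0 else f b a)"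
    by (cases "a = b") auto
  finally show ?thesis .
qed

text \<open>Entries of the matrices sqrt m E_aa, sqrt (m/2) (E_ab + E_ba) for a < b and
  sqrt (m/2) i (E_ab - E_ba) for a > b, where E_ab are the matrix units.\<close>
definition herm_unit :: "nat \<Rightarrow> nat \<Rightarrow> nat \<Rightarrow> nat \<Rightarrow> nat \<Rightarrow> complex" where
  "herm_unit m a b x y =
     (if (x = a \<and> y = b) \<or> (x = b \<and> y = a) then
        if a = b then of_real (sqrt (real m))
        else if a < b then of_real (sqrt (real m / 2))
        else if x = a then \<i> * of_real (sqrt (real m / 2)) else - \<i> * of_real (sqrt (real m / 2))
      else 0)"

lemma herm_unit_support: "herm_unit m a b x y \<noteq> 0 \<Longrightarrow> (x = a \<and> y = b) \<or> (x = b \<and> y = a)"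
  unfolding herm_unit_def by (simp split: if_splits)

lemma herm_unit_cnj: "cnj (herm_unit m a b y x) = herm_unit m a b x y"
  unfolding herm_unit_def by (cases "a = b"; cases "a < b") auto

lemma of_real_sqrt_square: "0 \<le> x \<Longrightarrow> complex_of_real (sqrt x) * complex_of_real (sqrt x) = of_real x"
  by (simp flip: of_real_mult)

lemma herm_unit_inner:
  assumes a: "a < m" and b: "b < m"
  shows "(\<Sum>x<m. \<Sum>y<m. cnj (herm_unit m a b x y) * herm_unit m c d x y) = (if a = c \<and> b = d then of_nat m else 0)"
proof -
  have "(\<Sum>x<m. \<Sum>y<m. cnj (herm_unit m a b x y) * herm_unit m c d x y) =
     cnj (herm_unit m a b a b) * herm_unit m c d a b + (if a = b then 0 else cnj (herm_unit m a b b a) * herm_unit m c d b a)"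
    using herm_unit_support by (intro sum_pair_support[OF a b]) fastforce
  also have "\<dots> = (if a = c \<and> b = d then of_nat m else 0)"
    by (cases "a = b"; cases "a < b"; cases "c = a"; cases "d = b"; cases "c = b"; cases "d = a")
      (simp_all add: herm_unit_def of_real_sqrt_square algebra_simps)
  finally show ?thesis .
qed

definition herm_unit_basis :: "nat \<Rightarrow> nat \<Rightarrow> complex mat" where
  "herm_unit_basis m k = mat m m (\<lambda>(x, y). herm_unit m (k div m) (k mod m) x y)"

lemma sum_lessThan_square_split:
  fixes f :: "nat \<Rightarrow> 'a::comm_monoid_add"
  shows "(\<Sum>k<m^2. f k) = (\<Sum>a<m. \<Sum>b<m. f (a * m + b))"
  unfolding power2_eq_square by (rule sum_lessThan_mult_split)

definition herm_unit_coeff :: "nat \<Rightarrow> complex mat \<Rightarrow> nat \<Rightarrow> nat \<Rightarrow> complex" where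
  "herm_unit_coeff m X a b =
     (if a = b then X $$ (a, a) / of_real (sqrt (real m))
      else if a < b then (X $$ (a, b) + X $$ (b, a)) / (2 * of_real (sqrt (real m / 2)))
      else (X $$ (a, b) - X $$ (b, a)) / (2 * \<i> * of_real (sqrt (real m / 2))))"

lemma herm_unit_coeff_expansion:
  assumes m: "0 < m"
  shows "herm_unit_coeff m X x y * herm_unit m x y x y +
      (if x = y then 0 else herm_unit_coeff m X y x * herm_unit m y x x y) = X $$ (x, y)"
proof -
  define s where "s = complex_of_real (sqrt (real m / 2))"
  have s: "s \<noteq> 0"
    unfolding s_def using m by simp
  consider "x = y" | "x < y" | "y < x"
    by linarith
  then show ?thesis
  proof cases
    case 1
    then show ?thesis
      using m by (simp add: herm_unit_def herm_unit_coeff_def)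
  next
    case 2
    then have "herm_unit m x y x y = s" "herm_unit m y x x y = - \<i> * s"
      and "herm_unit_coeff m X x y = (X $$ (x, y) + X $$ (y, x)) / (2 * s)"
      and "herm_unit_coeff m X y x = (X $$ (y, x) - X $$ (x, y)) / (2 * \<i> * s)"
      unfolding herm_unit_def herm_unit_coeff_def s_def by auto
    note entries = this
    show ?thesis
      unfolding entries using 2 s by (simp add: field_simps)
  next
    case 3
    then have "herm_unit m x y x y = \<i> * s" "herm_unit m y x x y = s"
      and "herm_unit_coeff m X x y = (X $$ (x, y) - X $$ (y, x)) / (2 * \<i> * s)"
      and "herm_unit_coeff m X y x = (X $$ (y, x) + X $$ (x, y)) / (2 * s)"
      unfolding herm_unit_def herm_unit_coeff_def s_def by auto
    note entries = this
    show ?thesis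
      unfolding entries using 3 s by (simp add: field_simps)
  qed
qed

lemma herm_unit_basis_span:
  assumes m: "0 < m" and x: "x < m" and y: "y < m"
  shows "X $$ (x, y) = (\<Sum>k<m^2. herm_unit_coeff m X (k div m) (k mod m) * herm_unit_basis m k $$ (x, y))"
proof -
  have "(\<Sum>k<m^2. herm_unit_coeff m X (k div m) (k mod m) * herm_unit_basis m k $$ (x, y)) =
        (\<Sum>a<m. \<Sum>b<m. herm_unit_coeff m X a b * herm_unit m a b x y)"
    unfolding sum_lessThan_square_split herm_unit_basis_def using x y by (intro sum.cong refl) simp
  also have "\<dots> = herm_unit_coeff m X x y * herm_unit m x y x y +
      (if x = y then 0 else herm_unit_coeff m X y x * herm_unit m y x x y)"
    using herm_unit_support by (intro sum_pair_support[OF x y]) fastforce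
  also have "\<dots> = X $$ (x, y)"
    by (rule herm_unit_coeff_expansion[OF m])
  finally show ?thesis ..
qed

lemma herm_onb_herm_unit_basis:
  assumes m: "0 < m"
  shows "herm_onb m (herm_unit_basis m)"
  unfolding herm_onb_def
proof (intro conjI allI impI ballI)
  fix k
  show "herm_unit_basis m k \<in> carrier_mat m m"
    unfolding herm_unit_basis_def by simp
  then show "hermitian (herm_unit_basis m k)"
    by (rule hermitianI) (simp add: herm_unit_basis_def herm_unit_cnj)
next
  fix k l assume k: "k < m^2" and l: "l < m^2"
  have "k div m < m" "k mod m < m"
    using k m by (simp_all add: power2_eq_square less_mult_imp_div_less)
  then have "hs_inner m (herm_unit_basis m k) (herm_unit_basis m l) =
      (if k div m = l div m \<and> k mod m = l mod m then of_nat m else 0) / of_nat m"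
    by (simp add: hs_inner_entrywise herm_unit_basis_def herm_unit_inner)
  also have "\<dots> = (if k = l then 1 else 0)"
  proof -
    have "(k div m = l div m \<and> k mod m = l mod m) \<longleftrightarrow> k = l"
      by (metis div_mult_mod_eq)
    then show ?thesis
      using m by simp
  qed
  finally show "hs_inner m (herm_unit_basis m k) (herm_unit_basis m l) = (if k = l then 1 else 0)" .
next
  fix X :: "complex mat"
  show "\<exists>c. \<forall>a<m. \<forall>b<m. X $$ (a, b) = (\<Sum>i<m^2. c i * herm_unit_basis m i $$ (a, b))"
    by (intro exI[of _ "\<lambda>k. herm_unit_coeff m X (k div m) (k mod m)"] allI impI herm_unit_basis_span[OF m])
qed

text \<open>A Householder reflection rotates the unit coefficient vector of the identity in the basis
  herm_unit_basis to the first basis vector.\<close>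
lemma std_onb_exists:
  assumes m: "0 < m"
  obtains A where "std_onb m A"
proof -
  define u where "u = (\<lambda>k. if k div m = k mod m then 1 / sqrt (real m) else 0)"
  have "(\<Sum>k<m^2. (u k)\<^sup>2) = (\<Sum>a<m. \<Sum>b<m. if b = a then 1 / real m else 0)"
    unfolding sum_lessThan_square_split u_def by (intro sum.cong refl) (auto simp: power_divide)
  then have un: "(\<Sum>k<m^2. (u k)\<^sup>2) = 1"
    using m by simp
  define A where "A = rotate_basis m (householder u) (herm_unit_basis m)"
  have "A 0 = 1\<^sub>m m"
  proof (rule eq_matI)
    fix x y assume "x < dim_row (1\<^sub>m m)" "y < dim_col (1\<^sub>m m)"
    then have x: "x < m" and y: "y < m"
      by auto
    have "A 0 $$ (x, y) = (\<Sum>k<m^2. complex_of_real (u k) * herm_unit m (k div m) (k mod m) x y)"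
      unfolding A_def rotate_basis_def herm_unit_basis_def using x y
      by (simp add: householder_col0[OF un])
    also have "\<dots> = (\<Sum>a<m. \<Sum>b<m. complex_of_real (u (a * m + b)) * herm_unit m a b x y)"
      unfolding sum_lessThan_square_split by (intro sum.cong refl) simp
    also have "\<dots> = complex_of_real (u (x * m + y)) * herm_unit m x y x y +
        (if x = y then 0 else complex_of_real (u (y * m + x)) * herm_unit m y x x y)"
      using herm_unit_support by (intro sum_pair_support[OF x y]) fastforce
    also have "\<dots> = 1\<^sub>m m $$ (x, y)"
      using m x y by (simp add: u_def herm_unit_def flip: of_real_mult)
    finally show "A 0 $$ (x, y) = 1\<^sub>m m $$ (x, y)" .
  qed (simp_all add: A_def rotate_basis_def)
  then have "std_onb m A"
    unfolding std_onb_iff A_def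
    using herm_onb_rotate_basis[OF herm_onb_herm_unit_basis[OF m] householder_orthogonal[OF un]] by simp
  then show ?thesis ..
qed

section \<open>Real matrices as complex matrices\<close>

definition rmat_to_mat :: "nat \<Rightarrow> rmat \<Rightarrow> complex mat" where
  "rmat_to_mat n A = mat n n (\<lambda>(i, j). complex_of_real (A i j))"

lemma rmat_to_mat_carrier [simp]: "rmat_to_mat n A \<in> carrier_mat n n"
  unfolding rmat_to_mat_def by simp

lemma rmat_to_mat_dim [simp]: "dim_row (rmat_to_mat n A) = n" "dim_col (rmat_to_mat n A) = n"
  unfolding rmat_to_mat_def by simp_all

lemma rmat_to_mat_index [simp]: "i < n \<Longrightarrow> j < n \<Longrightarrow> rmat_to_mat n A $$ (i, j) = complex_of_real (A i j)"
  unfolding rmat_to_mat_def by simp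

lemma rmat_to_mat_mult: "rmat_to_mat n (rmat_mult n A B) = rmat_to_mat n A * rmat_to_mat n B"
  unfolding rmat_to_mat_def rmat_mult_def by (rule eq_matI) (simp_all add: scalar_prod_def atLeast0LessThan)

lemma rmat_to_mat_cong: "rmat_eq n A B \<Longrightarrow> rmat_to_mat n A = rmat_to_mat n B"
  unfolding rmat_to_mat_def rmat_eq_def by (rule eq_matI) auto

lemma rmat_to_mat_one: "rmat_to_mat n rmat_one = 1\<^sub>m n"
  unfolding rmat_to_mat_def rmat_diag_def by (rule eq_matI) auto

lemma mat_adjoint_rmat_to_mat: "mat_adjoint (rmat_to_mat n A) = rmat_to_mat n (rmat_transpose A)"
  using mat_adjoint_carrier[OF rmat_to_mat_carrier, of n A]
  by (intro eq_matI) (simp_all add: mat_adjoint_index[OF rmat_to_mat_carrier] rmat_transpose_def)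

lemma char_poly_real_gram:
  fixes K V :: rmat
  assumes V: "rmat_orthogonal n V"
    and gram: "rmat_eq n (rmat_mult n (rmat_transpose K) K) (rmat_mult n (rmat_mult n V (rmat_diag d)) (rmat_transpose V))"
  shows "char_poly (mat_adjoint (rmat_to_mat n K) * rmat_to_mat n K) = (\<Prod>x\<leftarrow>map d [0..<n]. [:- complex_of_real x, 1:])"
proof -
  define P where "P = rmat_to_mat n V"
  define Q where "Q = rmat_to_mat n (rmat_transpose V)"
  define D where "D = rmat_to_mat n (rmat_diag d)"
  have "mat_adjoint (rmat_to_mat n K) * rmat_to_mat n K = rmat_to_mat n (rmat_mult n (rmat_transpose K) K)"
    unfolding mat_adjoint_rmat_to_mat rmat_to_mat_mult ..
  also have "\<dots> = P * D * Q"
    unfolding P_def Q_def D_def rmat_to_mat_mult[symmetric] by (rule rmat_to_mat_cong[OF gram])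
  finally have CD: "mat_adjoint (rmat_to_mat n K) * rmat_to_mat n K = P * D * Q" .
  have "P * Q = 1\<^sub>m n" "Q * P = 1\<^sub>m n"
    using V unfolding P_def Q_def rmat_orthogonal_def rmat_to_mat_mult[symmetric]
    by (simp_all add: rmat_to_mat_cong[of n _ rmat_one] rmat_to_mat_one)
  moreover have "mat_adjoint (rmat_to_mat n K) * rmat_to_mat n K \<in> carrier_mat n n"
    unfolding mat_adjoint_rmat_to_mat rmat_to_mat_mult[symmetric] by simp
  ultimately have "similar_mat (mat_adjoint (rmat_to_mat n K) * rmat_to_mat n K) D"
    using CD by (intro similar_matI[of _ _ P Q n]) (simp_all add: P_def Q_def D_def)
  then have "char_poly (mat_adjoint (rmat_to_mat n K) * rmat_to_mat n K) = char_poly D"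
    by (rule char_poly_similar)
  also have "\<dots> = (\<Prod>x\<leftarrow>diag_mat D. [:- x, 1:])"
    by (rule char_poly_upper_triangular[of _ n]) (auto simp: D_def upper_triangular_def rmat_to_mat_def rmat_diag_def)
  also have "diag_mat D = map (\<lambda>x. complex_of_real x) (map d [0..<n])"
    unfolding diag_mat_def D_def rmat_to_mat_def rmat_diag_def by (auto intro!: map_cong)
  finally show ?thesis
    by (simp add: o_def)
qed

lemma singular_values_of_char_poly:
  assumes C: "C \<in> carrier_mat n n" and nonneg: "\<forall>i. 0 \<le> c i" and sorted: "\<forall>i j. i \<le> j \<and> j < n \<longrightarrow> c j \<le> c i"
    and cp: "char_poly (mat_adjoint C * C) = (\<Prod>x\<leftarrow>map c [0..<n]. [:- complex_of_real (x\<^sup>2), 1:])"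
  shows "singular_values C (map c [0..<n])"
  unfolding singular_values_def using C nonneg sorted cp by (auto simp: sorted_wrt_iff_nth_less)

section \<open>The correlation matrix of a noisy maximally entangled state\<close>

text \<open>tr((X \<otimes> Y) psi) in coordinates, which makes sense (and is bilinear) for arbitrary X, Y.\<close>
definition kron_expval :: "nat \<Rightarrow> complex mat \<Rightarrow> complex mat \<Rightarrow> complex mat \<Rightarrow> complex" where
  "kron_expval m \<psi> X Y =
     (\<Sum>x<m * m. \<Sum>y<m * m. X $$ (x div m, y div m) * Y $$ (x mod m, y mod m) * \<psi> $$ (y, x))"

lemma div_mod_less_of_less_mult:
  fixes x m :: nat
  assumes "x < m * m"
  shows "x div m < m" and "x mod m < m"
  using assms by (simp_all add: less_mult_imp_div_less) (cases "m = 0"; simp)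

lemma mtrace_kron_mult:
  assumes X: "X \<in> carrier_mat m m" and Y: "Y \<in> carrier_mat m m" and \<psi>: "\<psi> \<in> carrier_mat (m * m) (m * m)"
  shows "mtrace (kron X Y * \<psi>) = kron_expval m \<psi> X Y"
  unfolding mtrace_def kron_expval_def using X Y \<psi>
  by (intro sum.cong) (auto simp: scalar_prod_def atLeast0LessThan kron_def div_mod_less_of_less_mult)

lemma kron_expval_basis_comb_left:
  "kron_expval m \<psi> (basis_comb m \<alpha> A) Y = (\<Sum>k<m^2. \<alpha> k * kron_expval m \<psi> (A k) Y)"
proof -
  have "kron_expval m \<psi> (basis_comb m \<alpha> A) Y = (\<Sum>x<m * m. \<Sum>y<m * m. \<Sum>k<m^2.
      \<alpha> k * (A k $$ (x div m, y div m) * Y $$ (x mod m, y mod m) * \<psi> $$ (y, x)))"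
    unfolding kron_expval_def
    by (intro sum.cong refl) (simp add: div_mod_less_of_less_mult sum_distrib_right mult.assoc)
  also have "\<dots> = (\<Sum>k<m^2. \<alpha> k * kron_expval m \<psi> (A k) Y)"
    unfolding kron_expval_def by (subst sum_swap_innermost) (simp add: sum_distrib_left)
  finally show ?thesis .
qed

lemma kron_expval_basis_comb_right:
  "kron_expval m \<psi> X (basis_comb m \<beta> B) = (\<Sum>l<m^2. \<beta> l * kron_expval m \<psi> X (B l))"
proof -
  have "kron_expval m \<psi> X (basis_comb m \<beta> B) = (\<Sum>x<m * m. \<Sum>y<m * m. \<Sum>l<m^2.
      \<beta> l * (X $$ (x div m, y div m) * B l $$ (x mod m, y mod m) * \<psi> $$ (y, x)))"
    unfolding kron_expval_def
    by (intro sum.cong refl) (simp add: div_mod_less_of_less_mult sum_distrib_left sum_distrib_right ac_simps)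
  also have "\<dots> = (\<Sum>l<m^2. \<beta> l * kron_expval m \<psi> X (B l))"
    unfolding kron_expval_def by (subst sum_swap_innermost) (simp add: sum_distrib_left)
  finally show ?thesis .
qed

lemma kron_expval_blocks:
  "kron_expval m \<psi> X Y = (\<Sum>a<m. \<Sum>b<m. \<Sum>c<m. \<Sum>d<m. X $$ (a, c) * Y $$ (b, d) * \<psi> $$ (c * m + d, a * m + b))"
  unfolding kron_expval_def sum_lessThan_mult_split by (intro sum.cong refl) simp

definition corr_real :: "nat \<Rightarrow> complex mat \<Rightarrow> (nat \<Rightarrow> complex mat) \<Rightarrow> (nat \<Rightarrow> complex mat) \<Rightarrow> rmat" where
  "corr_real m \<psi> A B = (\<lambda>k l. Re (kron_expval m \<psi> (A k) (B l)))"

context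
  fixes m :: nat and \<psi> :: "complex mat"
  assumes m: "0 < m" and \<psi>_carrier: "\<psi> \<in> carrier_mat (m * m) (m * m)" and \<psi>_hermitian: "hermitian \<psi>"
    and ptrace_A: "ptrace_A m \<psi> = (1 / of_nat m) \<cdot>\<^sub>m 1\<^sub>m m"
    and ptrace_B: "ptrace_B m \<psi> = (1 / of_nat m) \<cdot>\<^sub>m 1\<^sub>m m"
begin

lemma ptrace_A_index: "d < m \<Longrightarrow> b < m \<Longrightarrow> (\<Sum>a<m. \<psi> $$ (a * m + d, a * m + b)) = (if d = b then 1 / of_nat m else 0)"
  using arg_cong[OF ptrace_A, of "\<lambda>M. M $$ (d, b)"] unfolding ptrace_A_def by simp

lemma ptrace_B_index: "c < m \<Longrightarrow> a < m \<Longrightarrow> (\<Sum>b<m. \<psi> $$ (c * m + b, a * m + b)) = (if c = a then 1 / of_nat m else 0)"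
  using arg_cong[OF ptrace_B, of "\<lambda>M. M $$ (c, a)"] unfolding ptrace_B_def by simp

lemma kron_expval_one_left:
  assumes Y: "Y \<in> carrier_mat m m"
  shows "kron_expval m \<psi> (1\<^sub>m m) Y = mtrace Y / of_nat m"
proof -
  have "kron_expval m \<psi> (1\<^sub>m m) Y = (\<Sum>a<m. \<Sum>b<m. \<Sum>d<m. Y $$ (b, d) * \<psi> $$ (a * m + d, a * m + b))"
    unfolding kron_expval_blocks
  proof (rule sum.cong[OF refl], rule sum.cong[OF refl])
    fix a b assume a: "a \<in> {..<m}"
    have "(\<Sum>c<m. \<Sum>d<m. 1\<^sub>m m $$ (a, c) * Y $$ (b, d) * \<psi> $$ (c * m + d, a * m + b)) =
        (\<Sum>c<m. if c = a then (\<Sum>d<m. Y $$ (b, d) * \<psi> $$ (a * m + d, a * m + b)) else 0)"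
      using a by (intro sum.cong refl) auto
    then show "(\<Sum>c<m. \<Sum>d<m. 1\<^sub>m m $$ (a, c) * Y $$ (b, d) * \<psi> $$ (c * m + d, a * m + b)) =
        (\<Sum>d<m. Y $$ (b, d) * \<psi> $$ (a * m + d, a * m + b))"
      using a by simp
  qed
  also have "\<dots> = (\<Sum>b<m. \<Sum>d<m. Y $$ (b, d) * (\<Sum>a<m. \<psi> $$ (a * m + d, a * m + b)))"
    by (subst sum_swap_innermost[symmetric]) (simp add: sum_distrib_left)
  also have "\<dots> = (\<Sum>b<m. Y $$ (b, b) / of_nat m)"
    by (intro sum.cong refl) (simp add: ptrace_A_index if_distrib[of "\<lambda>x. _ * x"] cong: if_cong)
  finally show ?thesis
    using Y by (simp add: mtrace_carrier sum_divide_distrib)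
qed

lemma kron_expval_one_right:
  assumes X: "X \<in> carrier_mat m m"
  shows "kron_expval m \<psi> X (1\<^sub>m m) = mtrace X / of_nat m"
proof -
  have "kron_expval m \<psi> X (1\<^sub>m m) = (\<Sum>a<m. \<Sum>b<m. \<Sum>c<m. X $$ (a, c) * \<psi> $$ (c * m + b, a * m + b))"
    unfolding kron_expval_blocks
  proof (intro sum.cong refl)
    fix b c assume b: "b \<in> {..<m}"
    fix a
    have "(\<Sum>d<m. X $$ (a, c) * 1\<^sub>m m $$ (b, d) * \<psi> $$ (c * m + d, a * m + b)) =
        (\<Sum>d<m. if d = b then X $$ (a, c) * \<psi> $$ (c * m + b, a * m + b) else 0)"
      using b by (intro sum.cong refl) auto
    then show "(\<Sum>d<m. X $$ (a, c) * 1\<^sub>m m $$ (b, d) * \<psi> $$ (c * m + d, a * m + b)) =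
        X $$ (a, c) * \<psi> $$ (c * m + b, a * m + b)"
      using b by simp
  qed
  also have "\<dots> = (\<Sum>a<m. \<Sum>c<m. X $$ (a, c) * (\<Sum>b<m. \<psi> $$ (c * m + b, a * m + b)))"
    by (rule sum.cong[OF refl], subst sum.swap) (simp add: sum_distrib_left)
  also have "\<dots> = (\<Sum>a<m. X $$ (a, a) / of_nat m)"
    by (intro sum.cong refl) (simp add: ptrace_B_index if_distrib[of "\<lambda>x. _ * x"] cong: if_cong)
  finally show ?thesis
    using X by (simp add: mtrace_carrier sum_divide_distrib)
qed

lemma kron_expval_real:
  assumes X: "X \<in> carrier_mat m m" "hermitian X" and Y: "Y \<in> carrier_mat m m" "hermitian Y"
  shows "kron_expval m \<psi> X Y = complex_of_real (Re (kron_expval m \<psi> X Y))"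
proof -
  have "cnj (kron_expval m \<psi> X Y) =
      (\<Sum>x<m * m. \<Sum>y<m * m. X $$ (y div m, x div m) * Y $$ (y mod m, x mod m) * \<psi> $$ (x, y))"
    unfolding kron_expval_def using X Y \<psi>_carrier \<psi>_hermitian
    by (simp add: hermitian_index div_mod_less_of_less_mult)
  also have "\<dots> = kron_expval m \<psi> X Y"
    unfolding kron_expval_def by (rule sum.swap)
  finally show ?thesis
    by (simp add: complex_eq_iff)
qed

lemma kron_expval_basis_real:
  assumes A: "herm_onb m A" and B: "herm_onb m B" and k: "k < m^2" and l: "l < m^2"
  shows "kron_expval m \<psi> (A k) (B l) = complex_of_real (corr_real m \<psi> A B k l)"
  unfolding corr_real_def using herm_onbD(1,2)[OF A k] herm_onbD(1,2)[OF B l] by (rule kron_expval_real)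

lemma corr_mat_index:
  assumes A: "herm_onb m A" and B: "herm_onb m B" and i: "i < m^2" and j: "j < m^2"
  shows "corr_mat m \<psi> A B $$ (i, j) = complex_of_real (corr_real m \<psi> A B i j)"
  using i j herm_onbD(1)[OF A] herm_onbD(1)[OF B] unfolding corr_mat_def
  by (simp add: mtrace_kron_mult[OF _ _ \<psi>_carrier] kron_expval_basis_real[OF A B])

lemma corr_mat_eq_rmat_to_mat:
  assumes A: "herm_onb m A" and B: "herm_onb m B"
  shows "corr_mat m \<psi> A B = rmat_to_mat (m^2) (corr_real m \<psi> A B)"
  by (rule eq_matI) (simp_all add: corr_mat_index[OF A B], simp_all add: corr_mat_def)

lemma corr_real_first_row_col:
  assumes A: "std_onb m A" and B: "std_onb m B"
  shows "\<forall>l<m^2. corr_real m \<psi> A B 0 l = (if l = 0 then 1 else 0)"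
    and "\<forall>k<m^2. corr_real m \<psi> A B k 0 = (if k = 0 then 1 else 0)"
proof -
  have A': "herm_onb m A" "A 0 = 1\<^sub>m m" and B': "herm_onb m B" "B 0 = 1\<^sub>m m"
    using A B unfolding std_onb_iff by auto
  have m2: "0 < m^2"
    using m by simp
  show "\<forall>l<m^2. corr_real m \<psi> A B 0 l = (if l = 0 then 1 else 0)"
  proof (intro allI impI)
    fix l assume l: "l < m^2"
    have "kron_expval m \<psi> (A 0) (B l) = hs_inner m (B 0) (B l)"
      using herm_onbD(1)[OF B'(1) l] A'(2) B'(2) by (simp add: kron_expval_one_left hs_inner_one_left)
    then show "corr_real m \<psi> A B 0 l = (if l = 0 then 1 else 0)"
      using herm_onbD(3)[OF B'(1) m2 l] unfolding corr_real_def by simp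
  qed
  show "\<forall>k<m^2. corr_real m \<psi> A B k 0 = (if k = 0 then 1 else 0)"
  proof (intro allI impI)
    fix k assume k: "k < m^2"
    have "kron_expval m \<psi> (A k) (B 0) = hs_inner m (A 0) (A k)"
      using herm_onbD(1)[OF A'(1) k] A'(2) B'(2) by (simp add: kron_expval_one_right hs_inner_one_left)
    then show "corr_real m \<psi> A B k 0 = (if k = 0 then 1 else 0)"
      using herm_onbD(3)[OF A'(1) m2 k] unfolding corr_real_def by auto
  qed
qed

lemma corr_mat_rotate_basis:
  assumes A: "herm_onb m A" and B: "herm_onb m B" and i: "i < m^2" and j: "j < m^2"
  shows "corr_mat m \<psi> (rotate_basis m Wu A) (rotate_basis m Wv B) $$ (i, j) =
    complex_of_real (rmat_mult (m^2) (rmat_mult (m^2) (rmat_transpose Wu) (corr_real m \<psi> A B)) Wv i j)"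
proof -
  have "corr_mat m \<psi> (rotate_basis m Wu A) (rotate_basis m Wv B) $$ (i, j) =
      kron_expval m \<psi> (rotate_basis m Wu A i) (rotate_basis m Wv B j)"
    using i j unfolding corr_mat_def rotate_basis_def by (simp add: mtrace_kron_mult[OF _ _ \<psi>_carrier])
  also have "\<dots> = (\<Sum>k<m^2. complex_of_real (Wu k i) * (\<Sum>l<m^2. complex_of_real (Wv l j) * kron_expval m \<psi> (A k) (B l)))"
    unfolding rotate_basis_def kron_expval_basis_comb_left by (simp only: kron_expval_basis_comb_right)
  also have "\<dots> = (\<Sum>k<m^2. \<Sum>l<m^2. complex_of_real (Wu k i) * (complex_of_real (Wv l j) * kron_expval m \<psi> (A k) (B l)))"
    by (simp add: sum_distrib_left)
  also have "\<dots> = complex_of_real (\<Sum>k<m^2. \<Sum>l<m^2. Wu k i * corr_real m \<psi> A B k l * Wv l j)"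
    unfolding of_real_sum by (intro sum.cong refl) (simp add: kron_expval_basis_real[OF A B])
  also have "\<dots> = complex_of_real (\<Sum>l<m^2. \<Sum>k<m^2. Wu k i * corr_real m \<psi> A B k l * Wv l j)"
    by (subst sum.swap) (rule refl)
  also have "\<dots> = complex_of_real (rmat_mult (m^2) (rmat_mult (m^2) (rmat_transpose Wu) (corr_real m \<psi> A B)) Wv i j)"
    unfolding rmat_mult_def rmat_transpose_def by (simp add: sum_distrib_right)
  finally show ?thesis .
qed

text \<open>The first row and column of corr_real are those of the identity, so an SVD of the remaining
  block gives orthogonal changes of basis that fix the first basis vector.\<close>
lemma corr_real_svd:
  assumes A: "std_onb m A" and B: "std_onb m B"
  obtains Wu Wv c where "rmat_orthogonal (m^2) Wu" and "rmat_orthogonal (m^2) Wv"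
    and "\<forall>k<m^2. Wu k 0 = rmat_one k 0" and "\<forall>k<m^2. Wv k 0 = rmat_one k 0"
    and "\<forall>i. 0 \<le> c i" and "c 0 = 1" and "\<forall>i j. 1 \<le> i \<and> i \<le> j \<and> j < m^2 \<longrightarrow> c j \<le> c i"
    and "rmat_eq (m^2) (rmat_mult (m^2) (rmat_mult (m^2) (rmat_transpose Wu) (corr_real m \<psi> A B)) Wv) (rmat_diag c)"
proof -
  obtain n where N: "m^2 = Suc n"
    using m by (metis gr0_implies_Suc zero_less_power)
  define K where "K = corr_real m \<psi> A B"
  define K1 where "K1 = (\<lambda>i j. K (Suc i) (Suc j))"
  have K: "rmat_eq (Suc n) K (rmat_block 1 K1)"
    unfolding K1_def K_def using corr_real_first_row_col[OF A B] unfolding N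
    by (intro rmat_eq_blockI) simp_all
  obtain U1 V1 c1 where U1: "rmat_orthogonal n U1" and V1: "rmat_orthogonal n V1" and c1: "\<forall>i. c1 i \<ge> 0"
    and sorted: "\<forall>i j. i \<le> j \<and> j < n \<longrightarrow> c1 j \<le> c1 i"
    and diag: "rmat_eq n (rmat_mult n (rmat_mult n (rmat_transpose U1) K1) V1) (rmat_diag c1)"
    using real_svd_sorted[of n K1] by blast
  define c where "c = (\<lambda>i. if i = 0 then 1 else c1 (i - 1))"
  have "rmat_eq (m^2) (rmat_mult (m^2) (rmat_mult (m^2) (rmat_transpose (rmat_block 1 U1)) K) (rmat_block 1 V1))
    (rmat_diag c)"
    unfolding N c_def by (rule rmat_block_diagonalize[OF K diag])
  moreover have "\<forall>i j. 1 \<le> i \<and> i \<le> j \<and> j < m^2 \<longrightarrow> c j \<le> c i"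
  proof (intro allI impI)
    fix i j assume ij: "1 \<le> i \<and> i \<le> j \<and> j < m^2"
    then have "i - 1 \<le> j - 1 \<and> j - 1 < n"
      using N by auto
    then have "c1 (j - 1) \<le> c1 (i - 1)"
      using sorted by blast
    with ij show "c j \<le> c i"
      unfolding c_def by simp
  qed
  moreover have "rmat_orthogonal (m^2) (rmat_block 1 U1)" "rmat_orthogonal (m^2) (rmat_block 1 V1)"
    unfolding N using U1 V1 by (simp_all add: rmat_orthogonal_block)
  ultimately show ?thesis
    using that[of "rmat_block 1 U1" "rmat_block 1 V1" c] c1 unfolding K_def c_def
    by (simp add: rmat_block_def rmat_diag_def)
qed

end

section \<open>Maximal correlation of a diagonal correlation matrix\<close>

lemma hs_inner_self_coeffs:
  assumes A: "herm_onb m A" and P: "P \<in> carrier_mat m m"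
  shows "hs_inner m P P = complex_of_real (\<Sum>k<m^2. (cmod (hs_inner m (A k) P))\<^sup>2)"
proof -
  have "hs_inner m P P = hs_inner m (basis_comb m (\<lambda>k. hs_inner m (A k) P) A) P"
    by (rule arg_cong[where f = "\<lambda>X. hs_inner m X P", OF herm_onb_coeffs[OF A P]])
  also have "\<dots> = (\<Sum>k<m^2. cnj (hs_inner m (A k) P) * hs_inner m (A k) P)"
    using herm_onbD(1)[OF A] by (simp add: hs_inner_basis_comb_left[OF P])
  also have "\<dots> = complex_of_real (\<Sum>k<m^2. (cmod (hs_inner m (A k) P))\<^sup>2)"
    unfolding of_real_sum by (intro sum.cong refl) (metis complex_norm_square mult.commute)
  finally show ?thesis .
qed

lemma mtrace_kron_diagonal:
  assumes \<psi>: "\<psi> \<in> carrier_mat (m * m) (m * m)" and A: "herm_onb m A" and B: "herm_onb m B"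
    and P: "P \<in> carrier_mat m m" and Q: "Q \<in> carrier_mat m m"
    and diag: "\<forall>k<m^2. \<forall>l<m^2. kron_expval m \<psi> (A k) (B l) = (if k = l then complex_of_real (c k) else 0)"
  shows "mtrace (kron (mat_adjoint P) Q * \<psi>) =
    (\<Sum>k<m^2. cnj (hs_inner m (A k) P) * hs_inner m (B k) Q * complex_of_real (c k))"
proof -
  define p where "p = (\<lambda>k. hs_inner m (A k) P)"
  define q where "q = (\<lambda>k. hs_inner m (B k) Q)"
  have "mtrace (kron (mat_adjoint P) Q * \<psi>) = kron_expval m \<psi> (basis_comb m (\<lambda>k. cnj (p k)) A) (basis_comb m q B)"
    using herm_onb_coeffs[OF A P] herm_onb_coeffs[OF B Q] mat_adjoint_basis_comb[OF A]
    unfolding p_def q_def by (metis mtrace_kron_mult[OF basis_comb_carrier basis_comb_carrier \<psi>])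
  also have "\<dots> = (\<Sum>k<m^2. cnj (p k) * (\<Sum>l<m^2. q l * kron_expval m \<psi> (A k) (B l)))"
    unfolding kron_expval_basis_comb_left by (simp only: kron_expval_basis_comb_right)
  also have "\<dots> = (\<Sum>k<m^2. cnj (p k) * q k * complex_of_real (c k))"
  proof (rule sum.cong[OF refl])
    fix k assume k: "k \<in> {..<m^2}"
    have "(\<Sum>l<m^2. q l * kron_expval m \<psi> (A k) (B l)) = (\<Sum>l<m^2. if l = k then q k * complex_of_real (c k) else 0)"
      using diag k by (intro sum.cong refl) auto
    then show "cnj (p k) * (\<Sum>l<m^2. q l * kron_expval m \<psi> (A k) (B l)) = cnj (p k) * q k * complex_of_real (c k)"
      using k by simp
  qed
  finally show ?thesis
    unfolding p_def q_def .
qed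

lemma sum_weighted_products_le:
  fixes a b c :: "nat \<Rightarrow> real"
  assumes nonneg: "\<forall>k<n. 0 \<le> a k \<and> 0 \<le> b k \<and> 0 \<le> c k" and C: "0 \<le> C"
    and le: "\<forall>k<n. a k = 0 \<or> c k \<le> C"
    and a: "(\<Sum>k<n. (a k)\<^sup>2) = 1" and b: "(\<Sum>k<n. (b k)\<^sup>2) = 1"
  shows "(\<Sum>k<n. a k * b k * c k) \<le> C"
proof -
  have "(\<Sum>k<n. a k * b k * c k) \<le> (\<Sum>k<n. C * (((a k)\<^sup>2 + (b k)\<^sup>2) / 2))"
  proof (rule sum_mono)
    fix k assume "k \<in> {..<n}"
    then have "a k * b k * c k \<le> a k * b k * C"
      using nonneg le by (metis mult_eq_0_iff mult_left_mono mult_nonneg_nonneg order_refl lessThan_iff)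
    moreover have "a k * b k \<le> ((a k)\<^sup>2 + (b k)\<^sup>2) / 2"
      using sum_squares_bound[of "a k" "b k"] by simp
    ultimately show "a k * b k * c k \<le> C * (((a k)\<^sup>2 + (b k)\<^sup>2) / 2)"
      using C by (smt (verit) mult.commute mult_left_mono)
  qed
  also have "\<dots> = C"
    using a b by (simp add: sum_distrib_left[symmetric] sum.distrib sum_divide_distrib[symmetric])
  finally show ?thesis .
qed

lemma std_onb_traceless:
  assumes A: "std_onb m A" and i: "0 < i" "i < m^2"
  shows "mtrace (A i) = 0"
proof -
  have hA: "herm_onb m A" "A 0 = 1\<^sub>m m"
    using A unfolding std_onb_iff by auto
  have m: "0 < m"
    using i by (cases m) auto
  have "mtrace (A i) / of_nat m = hs_inner m (A 0) (A i)"
    using hA herm_onbD(1)[OF hA(1) i(2)] by (simp add: hs_inner_one_left)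
  also have "\<dots> = 0"
    using herm_onbD(3)[OF hA(1) less_trans[OF i] i(2)] i by simp
  finally show ?thesis
    using m by simp
qed

text \<open>The coefficient of a traceless P at A 0 = 1 vanishes, so only the weights c i \<le> c 1 enter.\<close>
lemma cmod_mtrace_kron_le:
  assumes \<psi>: "\<psi> \<in> carrier_mat (m * m) (m * m)" and A: "std_onb m A" and B: "herm_onb m B"
    and diag: "\<forall>k<m^2. \<forall>l<m^2. kron_expval m \<psi> (A k) (B l) = (if k = l then complex_of_real (c k) else 0)"
    and c_nonneg: "\<forall>i. 0 \<le> c i" and c_le: "\<forall>i. 1 \<le> i \<and> i < m^2 \<longrightarrow> c i \<le> c 1"
    and P: "P \<in> carrier_mat m m" "mtrace P = 0" "hs_inner m P P = 1"
    and Q: "Q \<in> carrier_mat m m" "hs_inner m Q Q = 1"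
  shows "cmod (mtrace (kron (mat_adjoint P) Q * \<psi>)) \<le> c 1"
proof -
  have hA: "herm_onb m A" "A 0 = 1\<^sub>m m"
    using A unfolding std_onb_iff by auto
  define p where "p = (\<lambda>k. cmod (hs_inner m (A k) P))"
  define q where "q = (\<lambda>k. cmod (hs_inner m (B k) Q))"
  have "cmod (mtrace (kron (mat_adjoint P) Q * \<psi>)) \<le>
      (\<Sum>k<m^2. cmod (cnj (hs_inner m (A k) P) * hs_inner m (B k) Q * complex_of_real (c k)))"
    unfolding mtrace_kron_diagonal[OF \<psi> hA(1) B P(1) Q(1) diag] by (rule norm_sum)
  also have "\<dots> = (\<Sum>k<m^2. p k * q k * c k)"
    unfolding p_def q_def using c_nonneg by (simp add: norm_mult)
  also have "\<dots> \<le> c 1"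
  proof (rule sum_weighted_products_le)
    show "(\<Sum>k<m^2. (p k)\<^sup>2) = 1"
      using hs_inner_self_coeffs[OF hA(1) P(1)] P(3) unfolding p_def by (metis of_real_eq_1_iff)
    show "(\<Sum>k<m^2. (q k)\<^sup>2) = 1"
      using hs_inner_self_coeffs[OF B Q(1)] Q(2) unfolding q_def by (metis of_real_eq_1_iff)
    have "p 0 = 0"
      using hA(2) P(1,2) by (simp add: p_def hs_inner_one_left)
    then show "\<forall>k<m^2. p k = 0 \<or> c k \<le> c 1"
      using c_le by (metis less_one not_less)
  qed (use c_nonneg p_def q_def in auto)
  finally show ?thesis .
qed

text \<open>The bound of cmod_mtrace_kron_le is attained at P = A 1 and Q = B 1.\<close>
lemma max_corr_of_diagonal:
  assumes m: "2 \<le> m" and \<psi>: "\<psi> \<in> carrier_mat (m * m) (m * m)"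
    and A: "std_onb m A" and B: "std_onb m B"
    and diag: "\<forall>i<m^2. \<forall>j<m^2. corr_mat m \<psi> A B $$ (i, j) = (if i = j then complex_of_real (c i) else 0)"
    and c_nonneg: "\<forall>i. 0 \<le> c i" and c_le: "\<forall>i. 1 \<le> i \<and> i < m^2 \<longrightarrow> c i \<le> c 1"
  shows "max_corr m \<psi> = c 1"
proof -
  have hA: "herm_onb m A" and hB: "herm_onb m B"
    using A B unfolding std_onb_iff by auto
  have one: "1 < m^2"
    using m by (simp add: power2_eq_square less_le_trans[OF _ mult_le_mono[OF m m]])
  have diag': "\<forall>k<m^2. \<forall>l<m^2. kron_expval m \<psi> (A k) (B l) = (if k = l then complex_of_real (c k) else 0)"
    using diag herm_onbD(1)[OF hA] herm_onbD(1)[OF hB]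
    by (simp add: corr_mat_def mtrace_kron_mult[OF _ _ \<psi>])
  define S where "S = {cmod (mtrace (kron (mat_adjoint P) Q * \<psi>)) | P Q.
      P \<in> carrier_mat m m \<and> Q \<in> carrier_mat m m \<and> mtrace P = 0 \<and> mtrace Q = 0 \<and>
      mtrace (mat_adjoint P * P) / of_nat m = 1 \<and> mtrace (mat_adjoint Q * Q) / of_nat m = 1}"
  have "mtrace (kron (mat_adjoint (A 1)) (B 1) * \<psi>) = complex_of_real (c 1)"
    using herm_onbD(1,2)[OF hA one] herm_onbD(1)[OF hB one] diag' one
    by (simp add: hermitian_def mtrace_kron_mult[OF _ _ \<psi>])
  then have "c 1 = cmod (mtrace (kron (mat_adjoint (A 1)) (B 1) * \<psi>)) \<and>
      A 1 \<in> carrier_mat m m \<and> B 1 \<in> carrier_mat m m \<and> mtrace (A 1) = 0 \<and> mtrace (B 1) = 0 \<and>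
      mtrace (mat_adjoint (A 1) * A 1) / of_nat m = 1 \<and> mtrace (mat_adjoint (B 1) * B 1) / of_nat m = 1"
    using herm_onbD(1)[OF hA one] herm_onbD(3)[OF hA one one] herm_onbD(1)[OF hB one] herm_onbD(3)[OF hB one one]
      std_onb_traceless[OF A _ one] std_onb_traceless[OF B _ one] c_nonneg
    unfolding hs_inner_def by simp
  then have "c 1 \<in> S"
    unfolding S_def by blast
  moreover have "x \<le> c 1" if "x \<in> S" for x
    using that cmod_mtrace_kron_le[OF \<psi> A hB diag' c_nonneg c_le]
    unfolding S_def hs_inner_def by blast
  ultimately have "Sup S = c 1"
    by (rule cSup_eq_maximum)
  then show ?thesis
    unfolding max_corr_def S_def .
qed

section \<open>Diagonal form of the correlation matrix\<close>

lemma noisy_max_entD: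
  assumes "noisy_max_ent m \<psi>"
  shows "\<psi> \<in> carrier_mat (m * m) (m * m)" and "hermitian \<psi>"
    and "ptrace_A m \<psi> = (1 / of_nat m) \<cdot>\<^sub>m 1\<^sub>m m" and "ptrace_B m \<psi> = (1 / of_nat m) \<cdot>\<^sub>m 1\<^sub>m m"
    and "max_corr m \<psi> < 1"
  using assms unfolding noisy_max_ent_def bipartite_state_def psd_def by auto

lemma corr_mat_diagonalization:
  assumes m: "2 \<le> m" and \<psi>: "noisy_max_ent m \<psi>" and A: "std_onb m A" and B: "std_onb m B"
  obtains Wu Wv c where "std_onb m (rotate_basis m Wu A)" and "std_onb m (rotate_basis m Wv B)"
    and "\<forall>i<m^2. \<forall>j<m^2. corr_mat m \<psi> (rotate_basis m Wu A) (rotate_basis m Wv B) $$ (i, j) =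
      (if i = j then complex_of_real (c i) else 0)"
    and "c 0 = 1" and "c 1 = max_corr m \<psi>" and "\<forall>i j. i \<le> j \<and> j < m^2 \<longrightarrow> c j \<le> c i"
    and "singular_values (corr_mat m \<psi> A B) (map c [0..<m^2])"
proof -
  have m0: "0 < m"
    using m by simp
  note state = m0 noisy_max_entD(1-4)[OF \<psi>]
  have hA: "herm_onb m A" and hB: "herm_onb m B"
    using A B unfolding std_onb_iff by auto
  obtain Wu Wv c where Wu: "rmat_orthogonal (m^2) Wu" "\<forall>k<m^2. Wu k 0 = rmat_one k 0"
    and Wv: "rmat_orthogonal (m^2) Wv" "\<forall>k<m^2. Wv k 0 = rmat_one k 0"
    and c_nonneg: "\<forall>i. 0 \<le> c i" and c0: "c 0 = 1" and c_sorted: "\<forall>i j. 1 \<le> i \<and> i \<le> j \<and> j < m^2 \<longrightarrow> c j \<le> c i"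
    and diag: "rmat_eq (m^2) (rmat_mult (m^2) (rmat_mult (m^2) (rmat_transpose Wu) (corr_real m \<psi> A B)) Wv) (rmat_diag c)"
    by (rule corr_real_svd[OF state A B])
  let ?A' = "rotate_basis m Wu A" and ?B' = "rotate_basis m Wv B"
  have A': "std_onb m ?A'" and B': "std_onb m ?B'"
    using std_onb_rotate_basis Wu Wv A B m0 by auto
  have diag': "\<forall>i<m^2. \<forall>j<m^2. corr_mat m \<psi> ?A' ?B' $$ (i, j) = (if i = j then complex_of_real (c i) else 0)"
    using corr_mat_rotate_basis[OF state hA hB] rmat_eqD[OF diag] by (simp add: rmat_diag_def)
  have c1: "c 1 = max_corr m \<psi>"
    using max_corr_of_diagonal[OF m noisy_max_entD(1)[OF \<psi>] A' B' diag' c_nonneg] c_sorted by simp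
  have "c j \<le> c i" if "i \<le> j" "j < m^2" for i j
  proof (cases "i = 0 \<and> j \<noteq> 0")
    case True
    then have "c j \<le> c 1"
      using c_sorted that by simp
    with True show ?thesis
      using c0 c1 noisy_max_entD(5)[OF \<psi>] by simp
  next
    case False
    with c_sorted that show ?thesis
      by (cases "i = 0") auto
  qed
  moreover have "singular_values (corr_mat m \<psi> A B) (map c [0..<m^2])"
  proof (rule singular_values_of_char_poly)
    show "char_poly (mat_adjoint (corr_mat m \<psi> A B) * corr_mat m \<psi> A B) =
        (\<Prod>x\<leftarrow>map c [0..<m^2]. [:- complex_of_real (x\<^sup>2), 1:])"
      unfolding corr_mat_eq_rmat_to_mat[OF state hA hB]
      using char_poly_real_gram[OF Wv(1) real_svd_gram[OF Wu(1) Wv(1) diag]] by (simp add: o_def)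
  qed (use c_nonneg calculation in \<open>simp_all add: corr_mat_def\<close>)
  ultimately show ?thesis
    using that A' B' diag' c0 c1 by blast
qed

theorem lemma7p3:
  fixes m :: nat and \<psi> :: "complex mat"
  assumes "m \<ge> 2"
    and "noisy_max_ent m \<psi>"
  shows "(\<forall>\<A> \<B>. std_onb m \<A> \<and> std_onb m \<B> \<longrightarrow>
            (\<exists>s. singular_values (corr_mat m \<psi> \<A> \<B>) s \<and> s ! 0 = 1 \<and> s ! 1 = max_corr m \<psi>))
       \<and> (\<exists>\<A> \<B> (c :: nat \<Rightarrow> real). std_onb m \<A> \<and> std_onb m \<B> \<and>
            (\<forall>i<m^2. \<forall>j<m^2. corr_mat m \<psi> \<A> \<B> $$ (i,j) = (if i = j then complex_of_real (c i) else 0)) \<and>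
            c 0 = 1 \<and> c 1 = max_corr m \<psi> \<and>
            (\<forall>i j. i \<le> j \<and> j < m^2 \<longrightarrow> c j \<le> c i))"
proof (intro conjI allI impI)
  have "2 * 2 \<le> m^2"
    using mult_le_mono[OF assms(1) assms(1)] by (simp add: power2_eq_square)
  then have one: "0 < m^2" "1 < m^2"
    by linarith+
  fix A B assume "std_onb m A \<and> std_onb m B"
  then obtain c where "singular_values (corr_mat m \<psi> A B) (map c [0..<m^2])" "c 0 = 1" "c 1 = max_corr m \<psi>"
    using corr_mat_diagonalization[OF assms] by metis
  then show "\<exists>s. singular_values (corr_mat m \<psi> A B) s \<and> s ! 0 = 1 \<and> s ! 1 = max_corr m \<psi>"
    using one by (intro exI[of _ "map c [0..<m^2]"]) simp
next
  have "0 < m"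
    using assms(1) by simp
  then obtain A where A: "std_onb m A"
    by (rule std_onb_exists)
  obtain Wu Wv c where "std_onb m (rotate_basis m Wu A)" "std_onb m (rotate_basis m Wv A)"
    "\<forall>i<m^2. \<forall>j<m^2. corr_mat m \<psi> (rotate_basis m Wu A) (rotate_basis m Wv A) $$ (i, j) =
      (if i = j then complex_of_real (c i) else 0)"
    "c 0 = 1" "c 1 = max_corr m \<psi>" "\<forall>i j. i \<le> j \<and> j < m^2 \<longrightarrow> c j \<le> c i"
    using corr_mat_diagonalization[OF assms A A] by metis
  then show "\<exists>\<A> \<B> (c :: nat \<Rightarrow> real). std_onb m \<A> \<and> std_onb m \<B> \<and>
      (\<forall>i<m^2. \<forall>j<m^2. corr_mat m \<psi> \<A> \<B> $$ (i,j) = (if i = j then complex_of_real (c i) else 0)) \<and>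
      c 0 = 1 \<and> c 1 = max_corr m \<psi> \<and> (\<forall>i j. i \<le> j \<and> j < m^2 \<longrightarrow> c j \<le> c i)"
    by blast
qed

end
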